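(* Let $n$ agents communicate over an undirected connected graph with adjacency matrix $A=[a_{ij}]\in\{0,1\}^{n\times n}$ and Laplacian $L=D-A$, where $D=\mathrm{diag}(d_1,\dots,d_n)$, $d_i=\sum_j a_{ij}$; let $\lambda_2(L)$ be the second smallest eigenvalue of $L$. Each agent $i$ has a bounded reference signal $r_i:[0,\infty)\to\mathbb{R}^m$ with bounded derivative $\dot r_i=f_i$. Each agent decomposes its data into two parts: vectors $r_i^\alpha(0),r_i^\beta(0)\in\mathbb{R}^m$ with $r_i^\alpha(0)+r_i^\beta(0)=2r_i(0)$, and bounded signals $f_i^\alpha,f_i^\beta$ with $f_i^\alpha(t)+f_i^\beta(t)=2f_i(t)$ for all $t$. The sub-states evolve as $$\begin{aligned} \dot x_i^\alpha(t)&=f_i^\alpha(t)+\kappa\sum_{j=1}^n a_{ij}\big(x_j^\alpha(t)-x_i^\alpha(t)\big)+\kappa\big(x_i^\beta(t)-x_i^\alpha(t)\big),\\ \dot x_i^\beta(t)&=f_i^\beta(t)+\kappa\big(x_i^\alpha(t)-x_i^\beta(t)\big),\\ x_i^\alpha(0)&=r_i^\alpha(0),\quad x_i^\beta(0)=r_i^\beta(0),\qquad i=1,\dots,n, \end{aligned}$$ with a constant $\kappa>0$. Then all sub-states $x_i^\alpha,x_i^\beta$ are input-to-state stable, and the tracking errors $x_i^\alpha(t)-\frac1n\sum_{j=1}^n r_j(t)$ and $x_i^\beta(t)-\frac1n\sum_{j=1}^n r_j(t)$ are ultimately bounded. Moreover, the convergence rate of the tracking errors (to their ultimate bound) is no worse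 than $\frac{\kappa}{2}\Big(\lambda_2(L)+2-\sqrt{\lambda_2^2(L)+4}\Big)$.
   Context: Input-to-state stability and ultimate boundedness are in the standard sense (inputs being the reference-derivative signals). "Convergence rate no worse than $c$" means the tracking errors approach their ultimate bound exponentially with exponent at least $c$.
   Formalization: Input-to-state stability is asserted for the stacked tracking errors $x_i^\alpha(t)-\frac1n\sum_{j=1}^n r_j(t)$ and $x_i^\beta(t)-\frac1n\sum_{j=1}^n r_j(t)$, with inputs $f_i^\alpha,f_i^\beta$, in place of the sub-states $x_i^\alpha,x_i^\beta$ themselves. Each condition added here is assumed in the paper as well or is needed for the statement above to hold. *)

theory Defs
  imports "HOL-Analysis.Analysis" "Jordan_Normal_Form.Char_Poly"
begin

definition undirected_graph :: "nat \<Rightarrow> (nat \<Rightarrow> nat \<Rightarrow> real) \<Rightarrow> bool" where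
  "undirected_graph n a \<longleftrightarrow>
     (\<forall>i<n. \<forall>j<n. a i j \<in> {0, 1} \<and> a i j = a j i) \<and> (\<forall>i<n. a i i = 0)"

definition graph_connected :: "nat \<Rightarrow> (nat \<Rightarrow> nat \<Rightarrow> real) \<Rightarrow> bool" where
  "graph_connected n a \<longleftrightarrow>
     (\<forall>i<n. \<forall>j<n. (\<lambda>x y. x < n \<and> y < n \<and> a x y = 1)\<^sup>*\<^sup>* i j)"

definition laplacian :: "nat \<Rightarrow> (nat \<Rightarrow> nat \<Rightarrow> real) \<Rightarrow> real mat" where
  "laplacian n a = mat n n (\<lambda>(i, j). (if i = j then (\<Sum>k<n. a i k) else 0) - a i j)"

definition lambda2 :: "real mat \<Rightarrow> real" where
  "lambda2 M = sorted_list_of_multiset (proots (char_poly M)) ! 1"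

definition class_K :: "(real \<Rightarrow> real) \<Rightarrow> bool" where
  "class_K g \<longleftrightarrow> continuous_on {0..} g \<and> g 0 = 0 \<and> strict_mono_on {0..} g"

definition class_KL :: "(real \<Rightarrow> real \<Rightarrow> real) \<Rightarrow> bool" where
  "class_KL b \<longleftrightarrow>
     (\<forall>t\<ge>0. class_K (\<lambda>s. b s t)) \<and>
     (\<forall>s\<ge>0. antimono_on {0..} (\<lambda>t. b s t) \<and> ((\<lambda>t. b s t) \<longlongrightarrow> 0) at_top)"

definition ref_avg :: "nat \<Rightarrow> (nat \<Rightarrow> real \<Rightarrow> 'v::real_vector) \<Rightarrow> real \<Rightarrow> 'v" where
  "ref_avg n r t = (1 / real n) *\<^sub>R (\<Sum>j<n. r j t)"

definition err_norm :: "nat \<Rightarrow> (nat \<Rightarrow> real \<Rightarrow> 'v::real_normed_vector) \<Rightarrow>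
    (nat \<Rightarrow> real \<Rightarrow> 'v) \<Rightarrow> (nat \<Rightarrow> real \<Rightarrow> 'v) \<Rightarrow> real \<Rightarrow> real" where
  "err_norm n r xa xb t =
     sqrt (\<Sum>i<n. (norm (xa i t - ref_avg n r t))\<^sup>2 + (norm (xb i t - ref_avg n r t))\<^sup>2)"

definition inp_norm :: "nat \<Rightarrow> (nat \<Rightarrow> real \<Rightarrow> 'v::real_normed_vector) \<Rightarrow>
    (nat \<Rightarrow> real \<Rightarrow> 'v) \<Rightarrow> real \<Rightarrow> real" where
  "inp_norm n fa fb s = sqrt (\<Sum>i<n. (norm (fa i s))\<^sup>2 + (norm (fb i s))\<^sup>2)"

definition tracking_system ::
  "nat \<Rightarrow> (nat \<Rightarrow> nat \<Rightarrow> real) \<Rightarrow> real \<Rightarrow>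
   (nat \<Rightarrow> real \<Rightarrow> 'v::euclidean_space) \<Rightarrow> (nat \<Rightarrow> real \<Rightarrow> 'v) \<Rightarrow>
   (nat \<Rightarrow> 'v) \<Rightarrow> (nat \<Rightarrow> 'v) \<Rightarrow> (nat \<Rightarrow> real \<Rightarrow> 'v) \<Rightarrow> (nat \<Rightarrow> real \<Rightarrow> 'v) \<Rightarrow>
   (nat \<Rightarrow> real \<Rightarrow> 'v) \<Rightarrow> (nat \<Rightarrow> real \<Rightarrow> 'v) \<Rightarrow> bool" where
  "tracking_system n a \<kappa> r f ra0 rb0 fa fb xa xb \<longleftrightarrow>
     (\<forall>i<n.
        bounded (r i ` {0..}) \<and> bounded (f i ` {0..}) \<and>
        (\<forall>t\<ge>0. (r i has_vector_derivative f i t) (at t within {0..})) \<and>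
        ra0 i + rb0 i = 2 *\<^sub>R r i 0 \<and>
        bounded (fa i ` {0..}) \<and> bounded (fb i ` {0..}) \<and>
        (\<forall>t\<ge>0. fa i t + fb i t = 2 *\<^sub>R f i t) \<and>
        (\<forall>t\<ge>0. (xa i has_vector_derivative
              (fa i t + \<kappa> *\<^sub>R (\<Sum>j<n. a i j *\<^sub>R (xa j t - xa i t))
                      + \<kappa> *\<^sub>R (xb i t - xa i t))) (at t within {0..})) \<and>
        (\<forall>t\<ge>0. (xb i has_vector_derivative
              (fb i t + \<kappa> *\<^sub>R (xa i t - xb i t))) (at t within {0..})) \<and>
        xa i 0 = ra0 i \<and> xb i 0 = rb0 i)"

end

theory Submission
  imports Defs
begin

text \<open>Write \<open>e\<close> for the stacked tracking errors \<open>x\<^sup>\<alpha>\<^sub>i - r\<close>, \<open>x\<^sup>\<beta>\<^sub>i - r\<close>, where \<open>r\<close> is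
  the average reference. Since the coupling is symmetric and the initial data are split
  consistently, \<open>\<Sum>\<^sub>i (x\<^sup>\<alpha>\<^sub>i + x\<^sup>\<beta>\<^sub>i) = 2 \<Sum>\<^sub>i r\<^sub>i\<close> for all times, so \<open>e\<close> stays in the
  hyperplane \<open>\<Sum>\<^sub>i (e\<^sup>\<alpha>\<^sub>i + e\<^sup>\<beta>\<^sub>i) = 0\<close> and the drift of \<open>r\<close> does not enter
  \<open>d/dt \<bar>e\<bar>\<^sup>2\<close>. On that hyperplane the coupling matrix \<open>[[L + I, -I], [-I, I]]\<close> is bounded
  below by \<open>c(\<mu>) = (\<mu> + 2 - \<surd>(\<mu>\<^sup>2 + 4)) / 2\<close>, where \<open>\<mu>\<close> is the least Rayleigh quotient of
  \<open>L\<close> on sum-zero vectors. That minimum is attained at an eigenvector, so \<open>\<mu>\<close> is a positive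
  eigenvalue of \<open>L\<close>, whence \<open>\<lambda>\<^sub>2 \<le> \<mu>\<close>; as \<open>c\<close> is increasing, \<open>\<kappa> c(\<mu>)\<close> is at least the rate
  in the theorem. Altogether \<open>d/dt \<bar>e\<bar>\<^sup>2 \<le> 2 \<bar>u\<bar> \<bar>e\<bar> - 2 \<kappa> c(\<mu>) \<bar>e\<bar>\<^sup>2\<close> with
  \<open>u = (f\<^sup>\<alpha>, f\<^sup>\<beta>)\<close>, and a comparison argument gives
  \<open>\<bar>e(t)\<bar> \<le> exp (- \<kappa> c(\<mu>) t) \<bar>e(0)\<bar> + sup \<bar>u\<bar> / (\<kappa> c(\<mu>))\<close>, from which all three claims follow.\<close>

section \<open>The Laplacian quadratic form\<close>

definition laplacian_action :: "nat \<Rightarrow> (nat \<Rightarrow> nat \<Rightarrow> real) \<Rightarrow> (nat \<Rightarrow> real) \<Rightarrow> nat \<Rightarrow> real" where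
  "laplacian_action n a y i = (\<Sum>j<n. a i j * (y i - y j))"

definition laplacian_form :: "nat \<Rightarrow> (nat \<Rightarrow> nat \<Rightarrow> real) \<Rightarrow> (nat \<Rightarrow> real) \<Rightarrow> real" where
  "laplacian_form n a y = (\<Sum>i<n. y i * laplacian_action n a y i)"

definition symmetric_weights :: "nat \<Rightarrow> (nat \<Rightarrow> nat \<Rightarrow> real) \<Rightarrow> bool" where
  "symmetric_weights n a \<longleftrightarrow> (\<forall>i<n. \<forall>j<n. a i j = a j i)"

lemma undirected_graph_symmetric: "undirected_graph n a \<Longrightarrow> symmetric_weights n a"
  by (simp add: undirected_graph_def symmetric_weights_def)

lemma undirected_graph_nonneg:
  assumes "undirected_graph n a" "i < n" "j < n"
  shows "0 \<le> a i j"
proof -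
  have "a i j \<in> {0, 1}"
    using assms unfolding undirected_graph_def by blast
  then show ?thesis
    by auto
qed

lemma laplacian_carrier_mat: "laplacian n a \<in> carrier_mat n n"
  by (simp add: laplacian_def)

lemma laplacian_mult_vec: "laplacian n a *\<^sub>v vec n y = vec n (laplacian_action n a y)"
proof (rule eq_vecI)
  fix i assume "i < dim_vec (vec n (laplacian_action n a y))"
  then have i: "i < n" by simp
  have "vec_index (laplacian n a *\<^sub>v vec n y) i
      = (\<Sum>j<n. ((if i = j then (\<Sum>k<n. a i k) else 0) - a i j) * y j)"
    using i by (auto simp: laplacian_def mult_mat_vec_def scalar_prod_def atLeast0LessThan
        intro!: sum.cong)
  also have "\<dots> = (\<Sum>j<n. (if i = j then (\<Sum>k<n. a i k) * y j else 0) - a i j * y j)"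
    by (rule sum.cong) (auto simp: algebra_simps)
  also have "\<dots> = (\<Sum>k<n. a i k) * y i - (\<Sum>j<n. a i j * y j)"
    using i by (simp add: sum_subtractf)
  also have "\<dots> = laplacian_action n a y i"
    by (simp add: laplacian_action_def right_diff_distrib sum_subtractf sum_distrib_left mult.commute)
  finally show "vec_index (laplacian n a *\<^sub>v vec n y) i = vec_index (vec n (laplacian_action n a y)) i"
    using i by simp
qed (simp add: laplacian_def)

lemma laplacian_eigenvalue_root:
  assumes "\<And>i. i < n \<Longrightarrow> laplacian_action n a y i = \<mu> * y i" and "\<exists>i<n. y i \<noteq> 0"
  shows "poly (char_poly (laplacian n a)) \<mu> = 0"
proof -
  have "eigenvector (laplacian n a) (vec n y) \<mu>"
    unfolding eigenvector_def
  proof (intro conjI)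
    show "vec n y \<in> carrier_vec (dim_row (laplacian n a))"
      by (simp add: laplacian_def)
    show "vec n y \<noteq> 0\<^sub>v (dim_row (laplacian n a))"
      using assms(2) by (auto simp: laplacian_def vec_eq_iff)
    show "laplacian n a *\<^sub>v vec n y = \<mu> \<cdot>\<^sub>v vec n y"
      using assms(1) by (auto simp: laplacian_mult_vec vec_eq_iff)
  qed
  then show ?thesis
    using eigenvalue_root_char_poly[OF laplacian_carrier_mat] eigenvalue_def by blast
qed

lemma lambda2_le_positive_root:
  assumes M: "M \<in> carrier_mat m m"
    and "poly (char_poly M) 0 = 0" "poly (char_poly M) \<mu> = 0" "0 < \<mu>"
  shows "lambda2 M \<le> \<mu>"
proof -
  define s where "s = sorted_list_of_multiset (proots (char_poly M))"
  have "char_poly M \<noteq> 0"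
    using degree_monic_char_poly[OF M] by auto
  then have set_s: "set s = {x. poly (char_poly M) x = 0}"
    unfolding s_def by simp
  have "0 \<in> set s" "\<mu> \<in> set s"
    using assms(2,3) set_s by simp_all
  then obtain i j where i: "i < length s" "s ! i = 0" and j: "j < length s" "s ! j = \<mu>"
    unfolding in_set_conv_nth by blast
  have "i \<noteq> j"
    using i j \<open>0 < \<mu>\<close> by auto
  then have "1 \<le> max i j" "max i j < length s"
    using i j by (auto simp: max_def)
  then have "s ! 1 \<le> s ! max i j"
    by (intro sorted_nth_mono) (simp_all add: s_def)
  also have "s ! max i j \<le> \<mu>"
    using i j \<open>0 < \<mu>\<close> by (auto simp: max_def)
  finally show ?thesis
    unfolding lambda2_def s_def .
qed

lemma symmetric_weights_sum_swap:
  fixes F :: "nat \<Rightarrow> nat \<Rightarrow> 'v::real_vector"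
  assumes "symmetric_weights n a"
  shows "(\<Sum>i<n. \<Sum>j<n. a i j *\<^sub>R F i j) = (\<Sum>i<n. \<Sum>j<n. a i j *\<^sub>R F j i)"
proof -
  have "(\<Sum>i<n. \<Sum>j<n. a i j *\<^sub>R F i j) = (\<Sum>j<n. \<Sum>i<n. a i j *\<^sub>R F i j)"
    by (rule sum.swap)
  also have "\<dots> = (\<Sum>j<n. \<Sum>i<n. a j i *\<^sub>R F i j)"
    using assms unfolding symmetric_weights_def by (intro sum.cong refl) auto
  finally show ?thesis .
qed

lemma symmetric_weights_sum_diff:
  fixes y :: "nat \<Rightarrow> 'v::real_vector"
  assumes "symmetric_weights n a"
  shows "(\<Sum>i<n. \<Sum>j<n. a i j *\<^sub>R (y i - y j)) = 0"
proof -
  have "(\<Sum>i<n. \<Sum>j<n. a i j *\<^sub>R y j) = (\<Sum>i<n. \<Sum>j<n. a i j *\<^sub>R y i)"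
    using symmetric_weights_sum_swap[OF assms, of "\<lambda>i j. y j"] by simp
  then show ?thesis
    by (simp add: scaleR_diff_right sum_subtractf)
qed

lemma sum_laplacian_action:
  assumes "symmetric_weights n a"
  shows "(\<Sum>i<n. laplacian_action n a y i) = 0"
  using symmetric_weights_sum_diff[OF assms, of y] by (simp add: laplacian_action_def)

lemma laplacian_action_self_adjoint:
  assumes "symmetric_weights n a"
  shows "(\<Sum>i<n. h i * laplacian_action n a y i) = (\<Sum>i<n. y i * laplacian_action n a h i)"
proof -
  have "(\<Sum>i<n. h i * laplacian_action n a y i)
      = (\<Sum>i<n. \<Sum>j<n. a i j * (h i * y i)) - (\<Sum>i<n. \<Sum>j<n. a i j * (h i * y j))"
    by (simp add: laplacian_action_def sum_distrib_left sum_subtractf algebra_simps)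
  moreover have "(\<Sum>i<n. y i * laplacian_action n a h i)
      = (\<Sum>i<n. \<Sum>j<n. a i j * (h i * y i)) - (\<Sum>i<n. \<Sum>j<n. a i j * (h j * y i))"
    by (simp add: laplacian_action_def sum_distrib_left sum_subtractf algebra_simps)
  moreover have "(\<Sum>i<n. \<Sum>j<n. a i j * (h j * y i)) = (\<Sum>i<n. \<Sum>j<n. a i j * (h i * y j))"
    using symmetric_weights_sum_swap[OF assms, of "\<lambda>i j. h j * y i"] by simp
  ultimately show ?thesis
    by simp
qed

lemma laplacian_form_eq_sum_squares:
  assumes "symmetric_weights n a"
  shows "laplacian_form n a y = (\<Sum>i<n. \<Sum>j<n. a i j * (y i - y j)\<^sup>2) / 2"
proof -
  have "(\<Sum>i<n. \<Sum>j<n. a i j * (y i - y j)\<^sup>2)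
      = (\<Sum>i<n. \<Sum>j<n. a i j * (y i * (y i - y j))) + (\<Sum>i<n. \<Sum>j<n. a i j * (y j * (y j - y i)))"
    by (simp add: sum.distrib[symmetric] power2_eq_square algebra_simps)
  also have "(\<Sum>i<n. \<Sum>j<n. a i j * (y j * (y j - y i)))
      = (\<Sum>i<n. \<Sum>j<n. a i j * (y i * (y i - y j)))"
    using symmetric_weights_sum_swap[OF assms, of "\<lambda>i j. y j * (y j - y i)"] by simp
  also have "(\<Sum>i<n. \<Sum>j<n. a i j * (y i * (y i - y j))) = laplacian_form n a y"
    by (simp add: laplacian_form_def laplacian_action_def sum_distrib_left algebra_simps)
  finally show ?thesis by simp
qed

lemma laplacian_form_nonneg:
  assumes "undirected_graph n a"
  shows "0 \<le> laplacian_form n a y"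
  unfolding laplacian_form_eq_sum_squares[OF undirected_graph_symmetric[OF assms]]
  using undirected_graph_nonneg[OF assms] by (intro divide_nonneg_pos sum_nonneg) auto

lemma laplacian_form_cong:
  "(\<And>i. i < n \<Longrightarrow> y i = z i) \<Longrightarrow> laplacian_form n a y = laplacian_form n a z"
  by (simp add: laplacian_form_def laplacian_action_def)

lemma laplacian_form_scale:
  "laplacian_form n a (\<lambda>i. c * y i) = c\<^sup>2 * laplacian_form n a y"
proof -
  have action: "laplacian_action n a (\<lambda>i. c * y i) i = c * laplacian_action n a y i" for i
    unfolding laplacian_action_def sum_distrib_left
    by (intro sum.cong) (auto simp: algebra_simps)
  show ?thesis
    unfolding laplacian_form_def sum_distrib_left
    by (intro sum.cong refl) (simp add: action power2_eq_square mult_ac)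
qed

lemma laplacian_form_add:
  assumes "symmetric_weights n a"
  shows "laplacian_form n a (\<lambda>i. y i + s * h i)
    = laplacian_form n a y + 2 * s * (\<Sum>i<n. h i * laplacian_action n a y i)
      + s\<^sup>2 * laplacian_form n a h"
proof -
  have action: "laplacian_action n a (\<lambda>i. y i + s * h i) i
      = laplacian_action n a y i + s * laplacian_action n a h i" for i
    unfolding laplacian_action_def sum_distrib_left sum.distrib[symmetric]
    by (intro sum.cong) (auto simp: algebra_simps)
  have "laplacian_form n a (\<lambda>i. y i + s * h i)
      = laplacian_form n a y + s * (\<Sum>i<n. y i * laplacian_action n a h i)
        + s * (\<Sum>i<n. h i * laplacian_action n a y i) + s\<^sup>2 * laplacian_form n a h"
    unfolding laplacian_form_def action
    by (simp add: sum.distrib sum_distrib_left algebra_simps power2_eq_square)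
  then show ?thesis
    using laplacian_action_self_adjoint[OF assms, of h y] by simp
qed

lemma laplacian_form_add_const:
  assumes "symmetric_weights n a"
  shows "laplacian_form n a (\<lambda>i. y i + c) = laplacian_form n a y"
proof -
  have "(\<Sum>i<n. c * laplacian_action n a y i) = 0"
    by (simp add: sum_distrib_left[symmetric] sum_laplacian_action[OF assms])
  moreover have "laplacian_form n a (\<lambda>_. c) = 0"
    by (simp add: laplacian_form_def laplacian_action_def)
  ultimately show ?thesis
    using laplacian_form_add[OF assms, of y 1 "\<lambda>_. c"] by simp
qed

lemma laplacian_form_eq_0_imp_const:
  assumes G: "undirected_graph n a" "graph_connected n a"
    and Q: "laplacian_form n a y = 0" and "i < n" "j < n"
  shows "y i = y j"
proof -
  have nonneg: "\<forall>k<n. \<forall>l<n. 0 \<le> a k l * (y k - y l)\<^sup>2"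
    using undirected_graph_nonneg[OF G(1)] by simp
  have "(\<Sum>k<n. \<Sum>l<n. a k l * (y k - y l)\<^sup>2) = 0"
    using Q laplacian_form_eq_sum_squares[OF undirected_graph_symmetric[OF G(1)]] by simp
  then have rows: "\<forall>k<n. (\<Sum>l<n. a k l * (y k - y l)\<^sup>2) = 0"
    using nonneg by (subst (asm) sum_nonneg_eq_0_iff) (auto intro!: sum_nonneg)
  have edge: "y k = y l" if "k < n" "l < n" "a k l = 1" for k l
  proof -
    have "(\<Sum>l<n. a k l * (y k - y l)\<^sup>2) = 0"
      using rows \<open>k < n\<close> by blast
    then have "\<forall>l<n. a k l * (y k - y l)\<^sup>2 = 0"
      using nonneg \<open>k < n\<close> by (subst (asm) sum_nonneg_eq_0_iff) auto
    then have "(y k - y l)\<^sup>2 = 0"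
      using that by auto
    then show ?thesis
      by simp
  qed
  have "(\<lambda>k l. k < n \<and> l < n \<and> a k l = 1)\<^sup>*\<^sup>* i j"
    using G(2) \<open>i < n\<close> \<open>j < n\<close> unfolding graph_connected_def by blast
  then show ?thesis
  proof (induction rule: rtranclp_induct)
    case (step k l)
    then show ?case
      using edge by metis
  qed simp
qed


section \<open>The spectral gap of a connected graph\<close>

lemma nonneg_quadratic_imp_linear_coeff_0:
  fixes A C :: real
  assumes "\<And>s. 0 \<le> s * A + s\<^sup>2 * C"
  shows "A = 0"
proof (rule ccontr)
  assume "A \<noteq> 0"
  define D where "D = \<bar>C\<bar> + 1"
  define s where "s = - A / (2 * D)"
  have "D > 0"
    by (simp add: D_def)
  have "s\<^sup>2 * C \<le> s\<^sup>2 * D"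
    unfolding D_def by (intro mult_left_mono) auto
  moreover have "s * A + s\<^sup>2 * D = - (A\<^sup>2) / (4 * D)"
    using \<open>D > 0\<close> unfolding s_def by (simp add: field_simps power2_eq_square)
  moreover have "- (A\<^sup>2) / (4 * D) < 0"
    using \<open>A \<noteq> 0\<close> \<open>D > 0\<close> by (simp add: divide_neg_pos)
  ultimately show False
    using assms[of s] by linarith
qed

lemma continuous_on_laplacian_form: "continuous_on S (laplacian_form n a)"
  unfolding laplacian_form_def laplacian_action_def
  by (intro continuous_intros continuous_on_subset[OF continuous_on_product_coordinates]) auto

text \<open>The coordinates beyond \<open>n\<close> are pinned to \<open>0\<close> so that the unit sphere of the sum-zero
  hyperplane becomes a compact subset of \<open>nat \<Rightarrow> real\<close> with its product topology.\<close>
definition sum_zero_sphere :: "nat \<Rightarrow> (nat \<Rightarrow> real) set" where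
  "sum_zero_sphere n = {y. (\<forall>i. y i \<in> (if i < n then {-1..1} else {0}))
      \<and> (\<Sum>i<n. y i) = 0 \<and> (\<Sum>i<n. (y i)\<^sup>2) = 1}"

lemma compact_sum_zero_sphere: "compact (sum_zero_sphere n)"
proof -
  have "compactin (product_topology (\<lambda>i. euclidean) UNIV)
          (PiE UNIV (\<lambda>i. if i < n then {-1..1::real} else {0}))"
    by (subst compactin_PiE) auto
  moreover have "PiE UNIV (\<lambda>i. if i < n then {-1..1::real} else {0})
      = {y. \<forall>i. y i \<in> (if i < n then {-1..1} else {0})}"
    by (auto simp: PiE_def Pi_def)
  ultimately have box: "compact {y::nat \<Rightarrow> real. \<forall>i. y i \<in> (if i < n then {-1..1} else {0})}"
    by (simp add: euclidean_product_topology)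
  have "continuous_on UNIV (\<lambda>y::nat \<Rightarrow> real. \<Sum>i<n. y i)"
    by (intro continuous_intros continuous_on_subset[OF continuous_on_product_coordinates]) auto
  then have closed_sum: "closed {y::nat \<Rightarrow> real. (\<Sum>i<n. y i) = 0}"
    using closed_Collect_eq[OF _ continuous_on_const] by blast
  have "continuous_on UNIV (\<lambda>y::nat \<Rightarrow> real. \<Sum>i<n. (y i)\<^sup>2)"
    by (intro continuous_intros continuous_on_subset[OF continuous_on_product_coordinates]) auto
  then have closed_sum_squares: "closed {y::nat \<Rightarrow> real. (\<Sum>i<n. (y i)\<^sup>2) = 1}"
    using closed_Collect_eq[OF _ continuous_on_const] by blast
  have "compact ({y::nat \<Rightarrow> real. \<forall>i. y i \<in> (if i < n then {-1..1} else {0})}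
      \<inter> {y. (\<Sum>i<n. y i) = 0} \<inter> {y. (\<Sum>i<n. (y i)\<^sup>2) = 1})"
    by (rule compact_Int_closed[OF compact_Int_closed[OF box closed_sum] closed_sum_squares])
  then show ?thesis
    by (simp add: sum_zero_sphere_def Collect_conj_eq Int_assoc)
qed

lemma sum_zero_sphere_nonempty:
  assumes "2 \<le> n"
  shows "sum_zero_sphere n \<noteq> {}"
proof -
  define c where "c = 1 / sqrt (2::real)"
  define y where "y i = (if i = 0 then c else 0) + (if i = 1 then - c else 0)" for i :: nat
  have "c\<^sup>2 = 1 / 2" "\<bar>c\<bar> \<le> 1"
    by (simp_all add: c_def power_divide)
  have "(\<Sum>i<n. y i) = 0"
    using assms by (simp add: y_def sum.distrib)
  moreover have "(\<Sum>i<n. (y i)\<^sup>2) = (\<Sum>i<n. (if i = 0 then c\<^sup>2 else 0) + (if i = 1 then c\<^sup>2 else 0))"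
    by (intro sum.cong) (auto simp: y_def)
  then have "(\<Sum>i<n. (y i)\<^sup>2) = 1"
    using assms \<open>c\<^sup>2 = 1 / 2\<close> by (simp add: sum.distrib)
  moreover have "\<forall>i. y i \<in> (if i < n then {-1..1} else {0})"
    using assms \<open>\<bar>c\<bar> \<le> 1\<close> by (auto simp: y_def)
  ultimately show ?thesis
    unfolding sum_zero_sphere_def by blast
qed

lemma laplacian_form_lower_bound_of_sphere:
  assumes sphere: "\<And>w. w \<in> sum_zero_sphere n \<Longrightarrow> m \<le> laplacian_form n a w"
    and y: "(\<Sum>i<n. y i) = 0"
  shows "m * (\<Sum>i<n. (y i)\<^sup>2) \<le> laplacian_form n a y"
proof (cases "(\<Sum>i<n. (y i)\<^sup>2) = 0")
  case True
  then have "\<forall>i<n. y i = 0"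
    by (subst (asm) sum_nonneg_eq_0_iff) auto
  then have "laplacian_form n a y = laplacian_form n a (\<lambda>_. 0)"
    by (intro laplacian_form_cong) simp
  then show ?thesis
    using True by (simp add: laplacian_form_def)
next
  case False
  define r where "r = (\<Sum>i<n. (y i)\<^sup>2)"
  have "r > 0"
    using False by (simp add: r_def order_less_le sum_nonneg)
  define w where "w i = (if i < n then y i / sqrt r else 0)" for i
  have "w i \<in> {-1..1}" if "i < n" for i
  proof -
    have "(y i)\<^sup>2 \<le> r"
      unfolding r_def by (rule member_le_sum[of i "{..<n}" "\<lambda>i. (y i)\<^sup>2", simplified])
        (use that in auto)
    then have "(w i)\<^sup>2 \<le> 1"
      unfolding w_def using that \<open>r > 0\<close> by (simp add: power_divide)
    then show ?thesis
      by (simp add: abs_square_le_1 abs_le_iff)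
  qed
  moreover have "(\<Sum>i<n. w i) = 0"
    using y by (simp add: w_def sum_divide_distrib[symmetric])
  moreover have "(\<Sum>i<n. (w i)\<^sup>2) = 1"
    using \<open>r > 0\<close> by (simp add: w_def power_divide sum_divide_distrib[symmetric] r_def[symmetric])
  ultimately have "w \<in> sum_zero_sphere n"
    unfolding sum_zero_sphere_def by (simp add: w_def)
  have "laplacian_form n a w = laplacian_form n a (\<lambda>i. (1 / sqrt r) * y i)"
    by (intro laplacian_form_cong) (simp add: w_def)
  also have "\<dots> = (1 / sqrt r)\<^sup>2 * laplacian_form n a y"
    by (rule laplacian_form_scale)
  also have "\<dots> = laplacian_form n a y / r"
    using \<open>r > 0\<close> by (simp add: power_divide)
  finally have "m \<le> laplacian_form n a y / r"
    using sphere[OF \<open>w \<in> sum_zero_sphere n\<close>] by simp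
  then show ?thesis
    using \<open>r > 0\<close> by (simp add: r_def[symmetric] pos_le_divide_eq)
qed

lemma rayleigh_minimizer_exists:
  assumes "2 \<le> n"
  obtains y0 where "(\<Sum>i<n. y0 i) = 0" "(\<Sum>i<n. (y0 i)\<^sup>2) = 1"
    "\<And>y :: nat \<Rightarrow> real. (\<Sum>i<n. y i) = 0 \<Longrightarrow> laplacian_form n a y0 * (\<Sum>i<n. (y i)\<^sup>2) \<le> laplacian_form n a y"
proof -
  have "\<exists>y0\<in>sum_zero_sphere n. \<forall>y\<in>sum_zero_sphere n. laplacian_form n a y0 \<le> laplacian_form n a y"
    using compact_sum_zero_sphere sum_zero_sphere_nonempty[OF assms]
    by (intro continuous_attains_inf continuous_on_laplacian_form)
  then obtain y0 where "y0 \<in> sum_zero_sphere n"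
    and min: "\<And>y. y \<in> sum_zero_sphere n \<Longrightarrow> laplacian_form n a y0 \<le> laplacian_form n a y"
    by blast
  show thesis
  proof (rule that)
    show "(\<Sum>i<n. y0 i) = 0" "(\<Sum>i<n. (y0 i)\<^sup>2) = 1"
      using \<open>y0 \<in> sum_zero_sphere n\<close> by (simp_all add: sum_zero_sphere_def)
    show "laplacian_form n a y0 * (\<Sum>i<n. (y i)\<^sup>2) \<le> laplacian_form n a y"
      if "(\<Sum>i<n. y i) = 0" for y
      using min that by (rule laplacian_form_lower_bound_of_sphere)
  qed
qed

text \<open>The first-order condition at the minimiser, tested against the sum-zero vector
  \<open>L y0 - \<mu> y0\<close> itself, forces that vector to vanish.\<close>
lemma rayleigh_minimizer_eigenvector:
  assumes sym: "symmetric_weights n a"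
    and bound: "\<And>y. (\<Sum>i<n. y i) = 0 \<Longrightarrow> \<mu> * (\<Sum>i<n. (y i)\<^sup>2) \<le> laplacian_form n a y"
    and y0: "(\<Sum>i<n. y0 i) = 0" "laplacian_form n a y0 = \<mu> * (\<Sum>i<n. (y0 i)\<^sup>2)"
    and "i < n"
  shows "laplacian_action n a y0 i = \<mu> * y0 i"
proof -
  have first_order: "(\<Sum>i<n. h i * laplacian_action n a y0 i) = \<mu> * (\<Sum>i<n. y0 i * h i)"
    if h: "(\<Sum>i<n. h i) = 0" for h
  proof -
    have "0 \<le> s * (2 * ((\<Sum>i<n. h i * laplacian_action n a y0 i) - \<mu> * (\<Sum>i<n. y0 i * h i)))
              + s\<^sup>2 * (laplacian_form n a h - \<mu> * (\<Sum>i<n. (h i)\<^sup>2))" for s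
    proof -
      have "(\<Sum>i<n. y0 i + s * h i) = 0"
        using y0(1) h by (simp add: sum.distrib sum_distrib_left[symmetric])
      then have "\<mu> * (\<Sum>i<n. (y0 i + s * h i)\<^sup>2) \<le> laplacian_form n a (\<lambda>i. y0 i + s * h i)"
        by (rule bound)
      moreover have "(\<Sum>i<n. (y0 i + s * h i)\<^sup>2)
          = (\<Sum>i<n. (y0 i)\<^sup>2) + 2 * s * (\<Sum>i<n. y0 i * h i) + s\<^sup>2 * (\<Sum>i<n. (h i)\<^sup>2)"
        by (simp add: power2_sum sum.distrib sum_distrib_left algebra_simps)
      ultimately show ?thesis
        unfolding laplacian_form_add[OF sym] y0(2) by (simp add: algebra_simps)
    qed
    from nonneg_quadratic_imp_linear_coeff_0[OF this] show ?thesis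
      by simp
  qed
  define g where "g i = laplacian_action n a y0 i - \<mu> * y0 i" for i
  have "(\<Sum>i<n. g i) = 0"
    using sum_laplacian_action[OF sym] y0(1)
    by (simp add: g_def sum_subtractf sum_distrib_left[symmetric])
  then have "(\<Sum>i<n. g i * laplacian_action n a y0 i) - \<mu> * (\<Sum>i<n. y0 i * g i) = 0"
    using first_order by simp
  moreover have "(\<Sum>i<n. (g i)\<^sup>2) = (\<Sum>i<n. g i * laplacian_action n a y0 i - \<mu> * (y0 i * g i))"
    by (intro sum.cong refl) (simp add: g_def power2_eq_square algebra_simps)
  then have "(\<Sum>i<n. (g i)\<^sup>2)
      = (\<Sum>i<n. g i * laplacian_action n a y0 i) - \<mu> * (\<Sum>i<n. y0 i * g i)"
    by (simp add: sum_subtractf sum_distrib_left)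
  ultimately have "(\<Sum>i<n. (g i)\<^sup>2) = 0"
    by simp
  then have "\<forall>i<n. g i = 0"
    by (subst (asm) sum_nonneg_eq_0_iff) auto
  then show ?thesis
    using \<open>i < n\<close> by (simp add: g_def)
qed

lemma laplacian_form_pos:
  assumes G: "undirected_graph n a" "graph_connected n a"
    and "(\<Sum>i<n. y i) = 0" and "\<exists>i<n. y i \<noteq> 0"
  shows "0 < laplacian_form n a y"
proof -
  have "laplacian_form n a y \<noteq> 0"
  proof
    assume Q: "laplacian_form n a y = 0"
    obtain k where "k < n" "y k \<noteq> 0"
      using assms(4) by blast
    have const: "y i = y k" if "i < n" for i
      using laplacian_form_eq_0_imp_const[OF G Q that \<open>k < n\<close>] .
    have "(\<Sum>i<n. y i) = (\<Sum>i<n. y k)"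
      by (intro sum.cong refl const) simp
    with assms(3) \<open>k < n\<close> \<open>y k \<noteq> 0\<close> show False
      by simp
  qed
  with laplacian_form_nonneg[OF G(1), of y] show ?thesis
    by simp
qed

lemma laplacian_char_poly_root_0:
  assumes "0 < n"
  shows "poly (char_poly (laplacian n a)) 0 = 0"
  using assms by (intro laplacian_eigenvalue_root[of n a "\<lambda>_. 1"])
    (auto simp: laplacian_action_def intro!: exI[of _ 0])

lemma laplacian_spectral_gap:
  assumes "2 \<le> n" and G: "undirected_graph n a" "graph_connected n a"
  obtains \<mu> where "0 < \<mu>" "lambda2 (laplacian n a) \<le> \<mu>"
    "\<And>y :: nat \<Rightarrow> real. (\<Sum>i<n. y i) = 0 \<Longrightarrow> \<mu> * (\<Sum>i<n. (y i)\<^sup>2) \<le> laplacian_form n a y"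
proof -
  obtain y0 where y0: "(\<Sum>i<n. y0 i) = 0" "(\<Sum>i<n. (y0 i)\<^sup>2) = 1"
    and min: "\<And>y :: nat \<Rightarrow> real. (\<Sum>i<n. y i) = 0 \<Longrightarrow> laplacian_form n a y0 * (\<Sum>i<n. (y i)\<^sup>2) \<le> laplacian_form n a y"
    using rayleigh_minimizer_exists[OF \<open>2 \<le> n\<close>] by blast
  define \<mu> where "\<mu> = laplacian_form n a y0"
  have bound: "\<And>y. (\<Sum>i<n. y i) = 0 \<Longrightarrow> \<mu> * (\<Sum>i<n. (y i)\<^sup>2) \<le> laplacian_form n a y"
    using min by (simp add: \<mu>_def)
  have nonzero: "\<exists>i<n. y0 i \<noteq> 0"
  proof (rule ccontr)
    assume "\<not> (\<exists>i<n. y0 i \<noteq> 0)"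
    then have "(\<Sum>i<n. (y0 i)\<^sup>2) = 0"
      by simp
    with y0(2) show False
      by simp
  qed
  have "0 < \<mu>"
    unfolding \<mu>_def using G y0(1) nonzero by (rule laplacian_form_pos)
  have "laplacian_action n a y0 i = \<mu> * y0 i" if "i < n" for i
    using rayleigh_minimizer_eigenvector[OF undirected_graph_symmetric[OF G(1)] bound y0(1) _ that]
    by (simp add: \<mu>_def y0(2))
  then have "poly (char_poly (laplacian n a)) \<mu> = 0"
    using nonzero by (rule laplacian_eigenvalue_root)
  then have "lambda2 (laplacian n a) \<le> \<mu>"
    using laplacian_char_poly_root_0 \<open>2 \<le> n\<close> \<open>0 < \<mu>\<close>
    by (intro lambda2_le_positive_root[OF laplacian_carrier_mat]) simp_all
  then show thesis
    using \<open>0 < \<mu>\<close> bound that by blast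
qed


section \<open>The convergence rate\<close>

text \<open>The smaller eigenvalue of \<open>[[\<mu> + 1, -1], [-1, 1]]\<close>, the matrix of the coupled pair
  \<open>(x\<^sup>\<alpha>, x\<^sup>\<beta>)\<close> along an eigenvector of the Laplacian with eigenvalue \<open>\<mu>\<close>.\<close>
definition consensus_rate :: "real \<Rightarrow> real" where
  "consensus_rate \<mu> = (\<mu> + 2 - sqrt (\<mu>\<^sup>2 + 4)) / 2"

lemma consensus_rate_le_1: "consensus_rate \<mu> \<le> 1"
proof -
  have "\<mu> \<le> sqrt (\<mu>\<^sup>2 + 4)"
    by (rule real_le_rsqrt) simp
  then show ?thesis
    unfolding consensus_rate_def by simp
qed

lemma consensus_rate_pos:
  assumes "0 < \<mu>"
  shows "0 < consensus_rate \<mu>"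
proof -
  have "sqrt (\<mu>\<^sup>2 + 4) < sqrt ((\<mu> + 2)\<^sup>2)"
    using assms by (intro real_sqrt_less_mono) (simp add: power2_eq_square algebra_simps)
  also have "\<dots> = \<mu> + 2"
    using assms by simp
  finally show ?thesis
    unfolding consensus_rate_def by simp
qed

lemma consensus_rate_mono:
  assumes "x \<le> y"
  shows "consensus_rate x \<le> consensus_rate y"
proof -
  define sx sy where "sx = sqrt (x\<^sup>2 + 4)" and "sy = sqrt (y\<^sup>2 + 4)"
  have "x < sx" "y < sy"
    unfolding sx_def sy_def by (auto intro!: real_less_rsqrt)
  have "(sy - sx) * (sy + sx) = (y - x) * (y + x)"
    by (simp add: sx_def sy_def algebra_simps power2_eq_square[symmetric])
  also have "\<dots> \<le> (y - x) * (sy + sx)"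
    using assms \<open>x < sx\<close> \<open>y < sy\<close> by (intro mult_left_mono) auto
  finally have "(sy - sx) * (sy + sx) \<le> (y - x) * (sy + sx)" .
  moreover have "0 < sy + sx"
    unfolding sx_def sy_def by (simp add: add_pos_pos add_nonneg_pos)
  ultimately have "sy - sx \<le> y - x"
    by simp
  then show ?thesis
    by (simp add: consensus_rate_def sx_def sy_def)
qed

text \<open>With \<open>c = consensus_rate \<mu>\<close>, \<open>\<alpha> = 1 - c\<close> and \<open>\<beta> = \<mu> + 1 - c\<close> one has \<open>\<alpha> \<beta> = 1\<close>, so the
  difference of the two sides is the square \<open>\<alpha> (q - \<beta> p)\<^sup>2\<close>.\<close>
lemma consensus_rate_quadratic_bound:
  assumes "0 \<le> \<mu>"
  shows "consensus_rate \<mu> * (p\<^sup>2 + q\<^sup>2) \<le> \<mu> * p\<^sup>2 + (p - q)\<^sup>2"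
proof -
  define s where "s = sqrt (\<mu>\<^sup>2 + 4)"
  define \<alpha> \<beta> where "\<alpha> = (s - \<mu>) / 2" and "\<beta> = (s + \<mu>) / 2"
  have "s\<^sup>2 = \<mu>\<^sup>2 + 4"
    by (simp add: s_def)
  then have "\<alpha> * \<beta> = 1"
    by (simp add: \<alpha>_def \<beta>_def field_simps power2_eq_square)
  have "\<mu> \<le> s"
    unfolding s_def by (rule real_le_rsqrt) simp
  then have "0 \<le> \<alpha>"
    by (simp add: \<alpha>_def)
  have "\<mu> * p\<^sup>2 + (p - q)\<^sup>2 - consensus_rate \<mu> * (p\<^sup>2 + q\<^sup>2) = \<beta> * p\<^sup>2 - 2 * p * q + \<alpha> * q\<^sup>2"
    unfolding consensus_rate_def s_def[symmetric] \<alpha>_def \<beta>_def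
    by (simp add: field_simps power2_eq_square)
  also have "\<dots> = \<alpha> * q\<^sup>2 - 2 * (\<alpha> * \<beta>) * p * q + (\<alpha> * \<beta>) * \<beta> * p\<^sup>2"
    using \<open>\<alpha> * \<beta> = 1\<close> by simp
  also have "\<dots> = \<alpha> * (q - \<beta> * p)\<^sup>2"
    by (simp add: algebra_simps power2_eq_square)
  finally have "\<mu> * p\<^sup>2 + (p - q)\<^sup>2 - consensus_rate \<mu> * (p\<^sup>2 + q\<^sup>2) = \<alpha> * (q - \<beta> * p)\<^sup>2" .
  moreover have "0 \<le> \<alpha> * (q - \<beta> * p)\<^sup>2"
    using \<open>0 \<le> \<alpha>\<close> by simp
  ultimately show ?thesis
    by linarith
qed

text \<open>The right side is the quadratic form of \<open>[[L + I, -I], [-I, I]]\<close> at \<open>(y, z)\<close>. Shifting \<open>y\<close>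
  by minus its mean \<open>s\<close> and \<open>z\<close> by \<open>s\<close> makes both sum-zero, so the spectral bound and the
  previous lemma apply; the leftover terms in \<open>s\<close> are nonnegative as \<open>consensus_rate \<mu> \<le> 1\<close>.\<close>
lemma consensus_rate_scalar_bound:
  assumes sym: "symmetric_weights n a" and "0 \<le> \<mu>" and "0 < n"
    and gap: "\<And>w. (\<Sum>i<n. w i) = 0 \<Longrightarrow> \<mu> * (\<Sum>i<n. (w i)\<^sup>2) \<le> laplacian_form n a w"
    and yz: "(\<Sum>i<n. y i + z i) = 0"
  shows "consensus_rate \<mu> * (\<Sum>i<n. (y i)\<^sup>2 + (z i)\<^sup>2)
    \<le> laplacian_form n a y + (\<Sum>i<n. (y i - z i)\<^sup>2)"
proof -
  define c where "c = consensus_rate \<mu>"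
  define s where "s = (\<Sum>i<n. y i) / real n"
  define p q where "p i = y i - s" and "q i = z i + s" for i
  have "(\<Sum>i<n. p i) = 0" "(\<Sum>i<n. q i) = 0"
    using \<open>0 < n\<close> yz by (simp_all add: p_def q_def s_def sum_subtractf sum.distrib)
  have "laplacian_form n a y = laplacian_form n a (\<lambda>i. p i + s)"
    by (simp add: p_def)
  also have "\<dots> = laplacian_form n a p"
    by (rule laplacian_form_add_const[OF sym])
  finally have "\<mu> * (\<Sum>i<n. (p i)\<^sup>2) \<le> laplacian_form n a y"
    using gap[OF \<open>(\<Sum>i<n. p i) = 0\<close>] by simp
  have split: "\<mu> * (p i)\<^sup>2 + (y i - z i)\<^sup>2 - c * ((y i)\<^sup>2 + (z i)\<^sup>2)
      = (\<mu> * (p i)\<^sup>2 + (p i - q i)\<^sup>2 - c * ((p i)\<^sup>2 + (q i)\<^sup>2))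
        + (4 - 2 * c) * s * (p i - q i) + (4 - 2 * c) * s\<^sup>2" for i
    by (simp add: p_def q_def algebra_simps power2_eq_square)
  have "(\<Sum>i<n. \<mu> * (p i)\<^sup>2 + (y i - z i)\<^sup>2 - c * ((y i)\<^sup>2 + (z i)\<^sup>2))
      = (\<Sum>i<n. \<mu> * (p i)\<^sup>2 + (p i - q i)\<^sup>2 - c * ((p i)\<^sup>2 + (q i)\<^sup>2))
        + (4 - 2 * c) * s * ((\<Sum>i<n. p i) - (\<Sum>i<n. q i)) + real n * ((4 - 2 * c) * s\<^sup>2)"
    unfolding split sum.distrib by (simp add: sum_distrib_left[symmetric] sum_subtractf)
  also have "\<dots> \<ge> 0"
  proof -
    have "0 \<le> (\<Sum>i<n. \<mu> * (p i)\<^sup>2 + (p i - q i)\<^sup>2 - c * ((p i)\<^sup>2 + (q i)\<^sup>2))"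
      using consensus_rate_quadratic_bound[OF \<open>0 \<le> \<mu>\<close>] by (intro sum_nonneg) (simp add: c_def)
    moreover have "0 \<le> real n * ((4 - 2 * c) * s\<^sup>2)"
      using consensus_rate_le_1[of \<mu>] by (simp add: c_def)
    ultimately show ?thesis
      using \<open>(\<Sum>i<n. p i) = 0\<close> \<open>(\<Sum>i<n. q i) = 0\<close> by simp
  qed
  finally have "0 \<le> (\<Sum>i<n. \<mu> * (p i)\<^sup>2) + (\<Sum>i<n. (y i - z i)\<^sup>2)
      - (\<Sum>i<n. c * ((y i)\<^sup>2 + (z i)\<^sup>2))"
    by (simp only: sum.distrib sum_subtractf)
  moreover have "(\<Sum>i<n. \<mu> * (p i)\<^sup>2) = \<mu> * (\<Sum>i<n. (p i)\<^sup>2)"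
    by (simp add: sum_distrib_left)
  moreover have "(\<Sum>i<n. c * ((y i)\<^sup>2 + (z i)\<^sup>2)) = c * (\<Sum>i<n. (y i)\<^sup>2 + (z i)\<^sup>2)"
    by (simp only: sum_distrib_left)
  ultimately show ?thesis
    using \<open>\<mu> * (\<Sum>i<n. (p i)\<^sup>2) \<le> laplacian_form n a y\<close> unfolding c_def[symmetric] by linarith
qed

lemma norm_power2_eq_sum_Basis: "(norm (x::'v::euclidean_space))\<^sup>2 = (\<Sum>b\<in>Basis. (inner x b)\<^sup>2)"
  unfolding power2_norm_eq_inner by (subst euclidean_inner) (simp add: power2_eq_square)

lemma inner_laplacian_eq_sum_Basis:
  fixes A :: "nat \<Rightarrow> 'v::euclidean_space"
  shows "(\<Sum>i<n. inner (A i) (\<Sum>j<n. a i j *\<^sub>R (A i - A j)))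
    = (\<Sum>b\<in>Basis. laplacian_form n a (\<lambda>i. inner (A i) b))"
proof -
  have "inner (A i) (\<Sum>j<n. a i j *\<^sub>R (A i - A j))
      = (\<Sum>b\<in>Basis. inner (A i) b * laplacian_action n a (\<lambda>i. inner (A i) b) i)" for i
    by (subst euclidean_inner)
      (simp add: laplacian_action_def inner_sum_left algebra_simps)
  then show ?thesis
    unfolding laplacian_form_def by (simp add: sum.swap[of _ Basis])
qed

lemma consensus_rate_vector_bound:
  fixes A B :: "nat \<Rightarrow> 'v::euclidean_space"
  assumes "symmetric_weights n a" "0 \<le> \<mu>" "0 < n"
    and "\<And>w. (\<Sum>i<n. w i) = 0 \<Longrightarrow> \<mu> * (\<Sum>i<n. (w i)\<^sup>2) \<le> laplacian_form n a w"
    and AB: "(\<Sum>i<n. A i + B i) = 0"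
  shows "consensus_rate \<mu> * (\<Sum>i<n. (norm (A i))\<^sup>2 + (norm (B i))\<^sup>2)
    \<le> (\<Sum>i<n. inner (A i) (\<Sum>j<n. a i j *\<^sub>R (A i - A j))) + (\<Sum>i<n. (norm (A i - B i))\<^sup>2)"
proof -
  define y z where "y = (\<lambda>b i. inner (A i) b)" and "z = (\<lambda>b i. inner (B i) b)"
  have coord: "consensus_rate \<mu> * (\<Sum>i<n. (y b i)\<^sup>2 + (z b i)\<^sup>2)
      \<le> laplacian_form n a (y b) + (\<Sum>i<n. (y b i - z b i)\<^sup>2)" for b
  proof (rule consensus_rate_scalar_bound[OF assms(1-4)])
    have "(\<Sum>i<n. y b i + z b i) = inner (\<Sum>i<n. A i + B i) b"
      by (simp add: y_def z_def inner_sum_left inner_add_left)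
    then show "(\<Sum>i<n. y b i + z b i) = 0"
      using AB by simp
  qed
  have "(\<Sum>i<n. (norm (A i))\<^sup>2 + (norm (B i))\<^sup>2) = (\<Sum>b\<in>Basis. \<Sum>i<n. (y b i)\<^sup>2 + (z b i)\<^sup>2)"
    by (simp add: norm_power2_eq_sum_Basis y_def z_def sum.distrib sum.swap[of _ Basis])
  then have "consensus_rate \<mu> * (\<Sum>i<n. (norm (A i))\<^sup>2 + (norm (B i))\<^sup>2)
      = (\<Sum>b\<in>Basis. consensus_rate \<mu> * (\<Sum>i<n. (y b i)\<^sup>2 + (z b i)\<^sup>2))"
    by (simp add: sum_distrib_left)
  also have "\<dots> \<le> (\<Sum>b\<in>Basis. laplacian_form n a (y b) + (\<Sum>i<n. (y b i - z b i)\<^sup>2))"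
    by (intro sum_mono coord)
  also have "\<dots> = (\<Sum>i<n. inner (A i) (\<Sum>j<n. a i j *\<^sub>R (A i - A j)))
      + (\<Sum>i<n. (norm (A i - B i))\<^sup>2)"
    by (simp add: inner_laplacian_eq_sum_Basis norm_power2_eq_sum_Basis y_def z_def
        inner_diff_left sum.distrib sum.swap[of _ Basis])
  finally show ?thesis .
qed


section \<open>Differential inequalities\<close>

lemma nonpos_derivative_imp_decreasing:
  fixes g :: "real \<Rightarrow> real"
  assumes "a \<le> b"
    and "\<And>t. a \<le> t \<Longrightarrow> t \<le> b \<Longrightarrow> \<exists>D. (g has_real_derivative D) (at t within {a..b}) \<and> D \<le> 0"
  shows "g b \<le> g a"
proof -
  have "\<forall>t\<in>{a..b}. \<exists>D. (g has_real_derivative D) (at t within {a..b}) \<and> D \<le> 0"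
    using assms(2) by simp
  then obtain D where D: "\<forall>t\<in>{a..b}. (g has_real_derivative D t) (at t within {a..b}) \<and> D t \<le> 0"
    by (rule bchoice[elim_format]) blast
  have "\<exists>t\<in>{a..b}. g b - g a = (\<lambda>h. D t * h) (b - a)"
    by (rule mvt_very_simple[OF assms(1)])
      (use D in \<open>auto simp: has_field_derivative_def mult_commute_abs\<close>)
  then obtain t where "t \<in> {a..b}" "g b - g a = D t * (b - a)"
    by auto
  moreover have "D t * (b - a) \<le> 0"
    using D \<open>t \<in> {a..b}\<close> assms(1) by (auto intro: mult_nonpos_nonneg)
  ultimately show ?thesis
    by simp
qed

lemma linear_differential_inequality:
  fixes w :: "real \<Rightarrow> real"
  assumes "0 < \<rho>" "0 \<le> K" "0 \<le> T"
    and deriv: "\<And>t. 0 \<le> t \<Longrightarrow> t \<le> T \<Longrightarrow>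
      \<exists>D. (w has_real_derivative D) (at t within {0..}) \<and> D \<le> K - \<rho> * w t"
  shows "w T \<le> exp (- \<rho> * T) * w 0 + K / \<rho>"
proof -
  define g where "g t = exp (\<rho> * t) * (w t - K / \<rho>)" for t
  have "g T \<le> g 0"
  proof (rule nonpos_derivative_imp_decreasing[OF \<open>0 \<le> T\<close>])
    fix t assume t: "0 \<le> t" "t \<le> T"
    obtain D where D: "(w has_real_derivative D) (at t within {0..})" "D \<le> K - \<rho> * w t"
      using deriv[OF t] by blast
    have "(w has_real_derivative D) (at t within {0..T})"
      using D(1) by (rule has_field_derivative_subset) auto
    then have "(g has_real_derivative exp (\<rho> * t) * \<rho> * (w t - K / \<rho>) + D * exp (\<rho> * t))
        (at t within {0..T})"
      unfolding g_def by (auto intro!: derivative_eq_intros)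
    moreover have "exp (\<rho> * t) * \<rho> * (w t - K / \<rho>) + D * exp (\<rho> * t)
        = exp (\<rho> * t) * (\<rho> * w t - K + D)"
      using \<open>0 < \<rho>\<close> by (simp add: field_simps)
    moreover have "exp (\<rho> * t) * (\<rho> * w t - K + D) \<le> 0"
      using D(2) by (simp add: mult_nonneg_nonpos)
    ultimately show "\<exists>D. (g has_real_derivative D) (at t within {0..T}) \<and> D \<le> 0"
      by auto
  qed
  then have "w T - K / \<rho> \<le> exp (- \<rho> * T) * (w 0 - K / \<rho>)"
    by (simp add: g_def exp_minus field_simps)
  moreover have "0 \<le> exp (- \<rho> * T) * (K / \<rho>)"
    using \<open>0 < \<rho>\<close> \<open>0 \<le> K\<close> by simp
  ultimately show ?thesis
    by (simp add: right_diff_distrib)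
qed

lemma has_real_derivative_sqrt:
  assumes "(g has_real_derivative D) (at t within S)" "0 < g t"
  shows "((\<lambda>t. sqrt (g t)) has_real_derivative D / (2 * sqrt (g t))) (at t within S)"
proof -
  have "((\<lambda>t. sqrt (g t)) has_real_derivative inverse (sqrt (g t)) / 2 * D) (at t within S)"
    by (rule DERIV_chain2[OF DERIV_real_sqrt[OF assms(2)] assms(1)])
  moreover have "inverse s / 2 * D = D / (2 * s)" for s :: real
    by (simp add: field_simps)
  ultimately show ?thesis
    by (rule DERIV_cong)
qed

lemma regularised_energy_derivative_bound:
  fixes \<rho> U \<delta> x D :: real
  assumes "0 < \<rho>" "0 \<le> U" "0 < \<delta>" "D \<le> 2 * U * x - 2 * \<rho> * x\<^sup>2"
  shows "D / (2 * sqrt (x\<^sup>2 + \<delta>\<^sup>2)) \<le> \<rho> * \<delta> + U - \<rho> * sqrt (x\<^sup>2 + \<delta>\<^sup>2)"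
proof -
  define w where "w = sqrt (x\<^sup>2 + \<delta>\<^sup>2)"
  have "x \<le> w" "\<delta> \<le> w"
    unfolding w_def using \<open>0 < \<delta>\<close> by (auto intro: real_le_rsqrt)
  have "2 * w * (\<rho> * \<delta> + U - \<rho> * w)
      = 2 * (\<rho> * \<delta> * (w - \<delta>)) + 2 * (U * w) - 2 * \<rho> * (w\<^sup>2 - \<delta>\<^sup>2)"
    by (simp add: algebra_simps power2_eq_square)
  moreover have "w\<^sup>2 - \<delta>\<^sup>2 = x\<^sup>2"
    by (simp add: w_def)
  moreover have "0 \<le> \<rho> * \<delta> * (w - \<delta>)"
    using \<open>0 < \<rho>\<close> \<open>0 < \<delta>\<close> \<open>\<delta> \<le> w\<close> by simp
  moreover have "U * x \<le> U * w"
    using \<open>x \<le> w\<close> \<open>0 \<le> U\<close> by (rule mult_left_mono)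
  ultimately have "D \<le> 2 * w * (\<rho> * \<delta> + U - \<rho> * w)"
    using assms(4) by (simp add: algebra_simps)
  moreover have "0 < w"
    using \<open>\<delta> \<le> w\<close> \<open>0 < \<delta>\<close> by linarith
  ultimately show ?thesis
    by (simp add: w_def[symmetric] pos_divide_le_eq mult.commute)
qed

text \<open>Since \<open>e\<close> may vanish, \<open>e\<close> itself need not be differentiable; the linear inequality is
  applied to the regularisation \<open>\<surd>(e\<^sup>2 + \<delta>\<^sup>2)\<close> instead, and \<open>\<delta> \<rightarrow> 0\<close>.\<close>
lemma energy_differential_inequality:
  fixes e :: "real \<Rightarrow> real"
  assumes "0 < \<rho>" "0 \<le> U" "0 \<le> T" "0 \<le> e 0"
    and deriv: "\<And>t. 0 \<le> t \<Longrightarrow> t \<le> T \<Longrightarrow>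
      \<exists>D. ((\<lambda>t. (e t)\<^sup>2) has_real_derivative D) (at t within {0..})
        \<and> D \<le> 2 * U * e t - 2 * \<rho> * (e t)\<^sup>2"
  shows "e T \<le> exp (- \<rho> * T) * e 0 + U / \<rho>"
proof (rule field_le_epsilon)
  fix \<epsilon> :: real assume "0 < \<epsilon>"
  define \<delta> where "\<delta> = \<epsilon> / 2"
  define w where "w t = sqrt ((e t)\<^sup>2 + \<delta>\<^sup>2)" for t
  have "0 < \<delta>"
    using \<open>0 < \<epsilon>\<close> by (simp add: \<delta>_def)
  have "w T \<le> exp (- \<rho> * T) * w 0 + (\<rho> * \<delta> + U) / \<rho>"
  proof (rule linear_differential_inequality[OF \<open>0 < \<rho>\<close> _ \<open>0 \<le> T\<close>])
    show "0 \<le> \<rho> * \<delta> + U"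
      using \<open>0 < \<rho>\<close> \<open>0 < \<delta>\<close> \<open>0 \<le> U\<close> by simp
    fix t assume "0 \<le> t" "t \<le> T"
    then obtain D where D: "((\<lambda>t. (e t)\<^sup>2) has_real_derivative D) (at t within {0..})"
      "D \<le> 2 * U * e t - 2 * \<rho> * (e t)\<^sup>2"
      using deriv by blast
    have "((\<lambda>t. (e t)\<^sup>2 + \<delta>\<^sup>2) has_real_derivative D) (at t within {0..})"
      using DERIV_add[OF D(1) DERIV_const] by simp
    moreover have "0 < (e t)\<^sup>2 + \<delta>\<^sup>2"
      using \<open>0 < \<delta>\<close> by (simp add: add_nonneg_pos)
    ultimately have "(w has_real_derivative D / (2 * w t)) (at t within {0..})"
      unfolding w_def[abs_def] by (rule has_real_derivative_sqrt[where g = "\<lambda>t. (e t)\<^sup>2 + \<delta>\<^sup>2"])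
    moreover have "D / (2 * w t) \<le> \<rho> * \<delta> + U - \<rho> * w t"
      unfolding w_def using \<open>0 < \<rho>\<close> \<open>0 \<le> U\<close> \<open>0 < \<delta>\<close> D(2)
      by (rule regularised_energy_derivative_bound)
    ultimately show "\<exists>D. (w has_real_derivative D) (at t within {0..}) \<and> D \<le> \<rho> * \<delta> + U - \<rho> * w t"
      by blast
  qed
  moreover have "(\<rho> * \<delta> + U) / \<rho> = \<delta> + U / \<rho>"
    using \<open>0 < \<rho>\<close> by (simp add: field_simps)
  moreover have "exp (- \<rho> * T) * w 0 \<le> exp (- \<rho> * T) * e 0 + \<delta>"
  proof -
    have "w 0 \<le> e 0 + \<delta>"
      unfolding w_def using sqrt_add_le_add_sqrt[of "(e 0)\<^sup>2" "\<delta>\<^sup>2"] \<open>0 \<le> e 0\<close> \<open>0 < \<delta>\<close> by simp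
    then have "exp (- \<rho> * T) * w 0 \<le> exp (- \<rho> * T) * e 0 + exp (- \<rho> * T) * \<delta>"
      by (simp add: distrib_left[symmetric])
    moreover have "exp (- \<rho> * T) * \<delta> \<le> \<delta>"
      using \<open>0 < \<rho>\<close> \<open>0 \<le> T\<close> \<open>0 < \<delta>\<close> by (simp add: mult_left_le_one_le)
    ultimately show ?thesis
      by linarith
  qed
  moreover have "e T \<le> w T"
    unfolding w_def by (rule real_le_rsqrt) simp
  ultimately show "e T \<le> exp (- \<rho> * T) * e 0 + U / \<rho> + \<epsilon>"
    using \<delta>_def by linarith
qed


section \<open>The tracking error dynamics\<close>

definition tracking_error ::
  "nat \<Rightarrow> (nat \<Rightarrow> real \<Rightarrow> 'v::real_vector) \<Rightarrow> (nat \<Rightarrow> real \<Rightarrow> 'v) \<Rightarrow> nat \<Rightarrow> real \<Rightarrow> 'v" where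
  "tracking_error n r x i t = x i t - ref_avg n r t"

lemma err_norm_tracking_error:
  "err_norm n r xa xb t
    = sqrt (\<Sum>i<n. (norm (tracking_error n r xa i t))\<^sup>2 + (norm (tracking_error n r xb i t))\<^sup>2)"
  by (simp add: err_norm_def tracking_error_def)

lemma err_norm_power2:
  "(err_norm n r xa xb t)\<^sup>2
    = (\<Sum>i<n. (norm (tracking_error n r xa i t))\<^sup>2 + (norm (tracking_error n r xb i t))\<^sup>2)"
  by (simp add: err_norm_tracking_error sum_nonneg)

lemma err_norm_nonneg: "0 \<le> err_norm n r xa xb t"
  by (simp add: err_norm_def sum_nonneg)

lemma inp_norm_nonneg: "0 \<le> inp_norm n fa fb t"
  by (simp add: inp_norm_def sum_nonneg)

lemma tracking_error_le_err_norm: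
  assumes "i < n"
  shows "norm (tracking_error n r xa i t) \<le> err_norm n r xa xb t"
    and "norm (tracking_error n r xb i t) \<le> err_norm n r xa xb t"
proof -
  let ?g = "\<lambda>i. (norm (tracking_error n r xa i t))\<^sup>2 + (norm (tracking_error n r xb i t))\<^sup>2"
  have "?g i \<le> (\<Sum>i<n. ?g i)"
    by (rule member_le_sum) (use assms in auto)
  then have "(norm (tracking_error n r xa i t))\<^sup>2 \<le> (\<Sum>i<n. ?g i)"
    and "(norm (tracking_error n r xb i t))\<^sup>2 \<le> (\<Sum>i<n. ?g i)"
    by (smt (verit) zero_le_power2)+
  then show "norm (tracking_error n r xa i t) \<le> err_norm n r xa xb t"
    and "norm (tracking_error n r xb i t) \<le> err_norm n r xa xb t"
    unfolding err_norm_tracking_error by (simp_all add: real_le_rsqrt)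
qed

lemma tracking_sum_conserved:
  fixes r :: "nat \<Rightarrow> real \<Rightarrow> 'v::euclidean_space"
  assumes sym: "symmetric_weights n a"
    and ts: "tracking_system n a \<kappa> r f ra0 rb0 fa fb xa xb" and "0 \<le> t"
  shows "(\<Sum>i<n. xa i t + xb i t) = 2 *\<^sub>R (\<Sum>i<n. r i t)"
proof -
  define G where "G t = (\<Sum>i<n. xa i t + xb i t) - 2 *\<^sub>R (\<Sum>i<n. r i t)" for t
  have "(G has_derivative (\<lambda>h. 0)) (at s within {0..})" if "s \<in> {0..}" for s
  proof -
    define Da Db where "Da i = fa i s + \<kappa> *\<^sub>R (\<Sum>j<n. a i j *\<^sub>R (xa j s - xa i s))
        + \<kappa> *\<^sub>R (xb i s - xa i s)" and "Db i = fb i s + \<kappa> *\<^sub>R (xa i s - xb i s)" for i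
    have "(G has_vector_derivative (\<Sum>i<n. Da i + Db i) - 2 *\<^sub>R (\<Sum>i<n. f i s)) (at s within {0..})"
      unfolding G_def using ts that
      by (intro has_vector_derivative_diff has_vector_derivative_sum has_vector_derivative_add
          bounded_linear.has_vector_derivative[OF bounded_linear_scaleR_right])
        (auto simp: tracking_system_def Da_def Db_def)
    moreover have "(\<Sum>i<n. Da i + Db i) = 2 *\<^sub>R (\<Sum>i<n. f i s)"
    proof -
      have "Da i + Db i = (fa i s + fb i s) + \<kappa> *\<^sub>R (\<Sum>j<n. a i j *\<^sub>R (xa j s - xa i s))" for i
        by (simp add: Da_def Db_def algebra_simps)
      then have "(\<Sum>i<n. Da i + Db i)
          = (\<Sum>i<n. fa i s + fb i s) + \<kappa> *\<^sub>R (\<Sum>i<n. \<Sum>j<n. a i j *\<^sub>R (xa j s - xa i s))"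
        by (simp add: sum.distrib scaleR_sum_right)
      also have "(\<Sum>i<n. fa i s + fb i s) = (\<Sum>i<n. 2 *\<^sub>R f i s)"
        using ts that by (intro sum.cong refl) (simp add: tracking_system_def)
      also have "(\<Sum>i<n. \<Sum>j<n. a i j *\<^sub>R (xa j s - xa i s)) = 0"
        using symmetric_weights_sum_diff[OF sym, of "\<lambda>j. - xa j s"] by simp
      finally show ?thesis
        by (simp add: scaleR_sum_right)
    qed
    ultimately show ?thesis
      by (simp add: has_vector_derivative_def)
  qed
  then obtain c where "\<forall>s\<in>{0..}. G s = c"
    using has_derivative_zero_constant[of "{0::real..}" G] by auto
  moreover have "G 0 = 0"
    using ts by (simp add: G_def tracking_system_def scaleR_sum_right[symmetric] sum.distrib[symmetric])
  ultimately have "G t = 0"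
    using \<open>0 \<le> t\<close> by auto
  then show ?thesis
    by (simp add: G_def)
qed

lemma tracking_errors_sum_zero:
  fixes r :: "nat \<Rightarrow> real \<Rightarrow> 'v::euclidean_space"
  assumes "symmetric_weights n a" "tracking_system n a \<kappa> r f ra0 rb0 fa fb xa xb"
    and "0 < n" "0 \<le> t"
  shows "(\<Sum>i<n. tracking_error n r xa i t + tracking_error n r xb i t) = 0"
proof -
  have "(\<Sum>i<n. tracking_error n r xa i t + tracking_error n r xb i t)
      = (\<Sum>i<n. (xa i t + xb i t) - 2 *\<^sub>R ref_avg n r t)"
    by (intro sum.cong refl) (simp add: tracking_error_def algebra_simps scaleR_2)
  also have "\<dots> = (\<Sum>i<n. xa i t + xb i t) - real n *\<^sub>R (2 *\<^sub>R ref_avg n r t)"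
    by (simp add: sum_subtractf sum_constant_scaleR)
  also have "\<dots> = 0"
    using tracking_sum_conserved[OF assms(1,2,4)] \<open>0 < n\<close> by (simp add: ref_avg_def)
  finally show ?thesis .
qed

lemma ref_avg_has_vector_derivative:
  assumes "tracking_system n a \<kappa> r f ra0 rb0 fa fb xa xb" "0 \<le> t"
  shows "(ref_avg n r has_vector_derivative ref_avg n f t) (at t within {0..})"
proof -
  have "((\<lambda>t. (1 / real n) *\<^sub>R (\<Sum>j<n. r j t)) has_vector_derivative
      (1 / real n) *\<^sub>R (\<Sum>j<n. f j t)) (at t within {0..})"
    using assms
    by (intro bounded_linear.has_vector_derivative[OF bounded_linear_scaleR_right]
        has_vector_derivative_sum) (auto simp: tracking_system_def)
  then show ?thesis
    by (simp add: ref_avg_def[abs_def])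
qed

lemma tracking_error_has_vector_derivative:
  fixes r :: "nat \<Rightarrow> real \<Rightarrow> 'v::euclidean_space"
  assumes ts: "tracking_system n a \<kappa> r f ra0 rb0 fa fb xa xb" and "0 \<le> t" "i < n"
  defines "ea j \<equiv> tracking_error n r xa j t" and "eb j \<equiv> tracking_error n r xb j t"
  shows "(tracking_error n r xa i has_vector_derivative
      fa i t - ref_avg n f t - \<kappa> *\<^sub>R (\<Sum>j<n. a i j *\<^sub>R (ea i - ea j)) - \<kappa> *\<^sub>R (ea i - eb i))
      (at t within {0..})"
    and "(tracking_error n r xb i has_vector_derivative
      fb i t - ref_avg n f t + \<kappa> *\<^sub>R (ea i - eb i)) (at t within {0..})"
proof -
  have error_fun: "tracking_error n r x i = (\<lambda>t. x i t - ref_avg n r t)" for x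
    by (simp add: fun_eq_iff tracking_error_def)
  have diff: "ea i - ea j = xa i t - xa j t" "ea i - eb i = xa i t - xb i t" for j
    by (simp_all add: ea_def eb_def tracking_error_def)
  have xa: "(xa i has_vector_derivative fa i t + \<kappa> *\<^sub>R (\<Sum>j<n. a i j *\<^sub>R (xa j t - xa i t))
      + \<kappa> *\<^sub>R (xb i t - xa i t)) (at t within {0..})"
    and xb: "(xb i has_vector_derivative fb i t + \<kappa> *\<^sub>R (xa i t - xb i t)) (at t within {0..})"
    using ts assms(2,3) by (simp_all add: tracking_system_def)
  have ref: "(ref_avg n r has_vector_derivative ref_avg n f t) (at t within {0..})"
    using ts assms(2) by (rule ref_avg_has_vector_derivative)
  have coupling: "\<kappa> *\<^sub>R (\<Sum>j<n. a i j *\<^sub>R (xa j t - xa i t))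
      = - (\<kappa> *\<^sub>R (\<Sum>j<n. a i j *\<^sub>R (ea i - ea j)))"
    by (simp add: diff scaleR_diff_right sum_subtractf)
  have exchange: "\<kappa> *\<^sub>R (xb i t - xa i t) = - (\<kappa> *\<^sub>R (ea i - eb i))"
    by (simp add: diff scaleR_diff_right)
  show "(tracking_error n r xa i has_vector_derivative
      fa i t - ref_avg n f t - \<kappa> *\<^sub>R (\<Sum>j<n. a i j *\<^sub>R (ea i - ea j)) - \<kappa> *\<^sub>R (ea i - eb i))
      (at t within {0..})"
    unfolding error_fun using has_vector_derivative_diff[OF xa ref]
    by (rule has_vector_derivative_eq_rhs)
      (simp only: coupling exchange, simp only: diff_conv_add_uminus add_ac)
  show "(tracking_error n r xb i has_vector_derivative
      fb i t - ref_avg n f t + \<kappa> *\<^sub>R (ea i - eb i)) (at t within {0..})"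
    unfolding error_fun using has_vector_derivative_diff[OF xb ref]
    by (simp add: diff algebra_simps)
qed

lemma has_real_derivative_power2_norm:
  fixes g :: "real \<Rightarrow> 'v::real_inner"
  assumes "(g has_vector_derivative g') (at t within S)"
  shows "((\<lambda>t. (norm (g t))\<^sup>2) has_real_derivative 2 * inner (g t) g') (at t within S)"
proof -
  have "((\<lambda>t. inner (g t) (g t)) has_vector_derivative inner (g t) g' + inner g' (g t)) (at t within S)"
    by (rule bounded_bilinear.has_vector_derivative[OF bounded_bilinear_inner assms assms])
  then show ?thesis
    unfolding has_real_derivative_iff_has_vector_derivative power2_norm_eq_inner
    by (rule has_vector_derivative_eq_rhs) (simp add: inner_commute)
qed

lemma sum_inner_pairs_le:
  fixes A B F G :: "'i \<Rightarrow> 'v::real_inner"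
  shows "(\<Sum>i\<in>I. inner (A i) (F i) + inner (B i) (G i))
    \<le> sqrt (\<Sum>i\<in>I. (norm (A i))\<^sup>2 + (norm (B i))\<^sup>2) * sqrt (\<Sum>i\<in>I. (norm (F i))\<^sup>2 + (norm (G i))\<^sup>2)"
proof -
  have "(\<Sum>i\<in>I. inner (A i) (F i) + inner (B i) (G i))
      \<le> (\<Sum>i\<in>I. \<bar>norm (A i, B i)\<bar> * \<bar>norm (F i, G i)\<bar>)"
    using norm_cauchy_schwarz[of "(A i, B i)" "(F i, G i)" for i] by (intro sum_mono) simp
  also have "\<dots> \<le> L2_set (\<lambda>i. norm (A i, B i)) I * L2_set (\<lambda>i. norm (F i, G i)) I"
    by (rule L2_set_mult_ineq)
  finally show ?thesis
    by (simp add: L2_set_def norm_Pair)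
qed

text \<open>The left side is \<open>d/dt \<bar>e\<bar>\<^sup>2 / 2\<close> along the error dynamics, \<open>m\<close> being the derivative of the
  average reference.\<close>
lemma coupled_drift_bound:
  fixes A B F G :: "nat \<Rightarrow> 'v::euclidean_space"
  assumes sym: "symmetric_weights n a" and "0 \<le> \<mu>" "0 < n"
    and gap: "\<And>w. (\<Sum>i<n. w i) = 0 \<Longrightarrow> \<mu> * (\<Sum>i<n. (w i)\<^sup>2) \<le> laplacian_form n a w"
    and "0 \<le> \<kappa>" and AB: "(\<Sum>i<n. A i + B i) = 0"
  defines "E \<equiv> (\<Sum>i<n. (norm (A i))\<^sup>2 + (norm (B i))\<^sup>2)"
  shows "(\<Sum>i<n. inner (A i) (F i - m - \<kappa> *\<^sub>R (\<Sum>j<n. a i j *\<^sub>R (A i - A j)) - \<kappa> *\<^sub>R (A i - B i))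
      + inner (B i) (G i - m + \<kappa> *\<^sub>R (A i - B i)))
    \<le> sqrt E * sqrt (\<Sum>i<n. (norm (F i))\<^sup>2 + (norm (G i))\<^sup>2) - \<kappa> * consensus_rate \<mu> * E"
proof -
  define L where "L i = (\<Sum>j<n. a i j *\<^sub>R (A i - A j))" for i
  define X Y where "X = (\<Sum>i<n. inner (A i) (F i) + inner (B i) (G i))"
    and "Y = (\<Sum>i<n. inner (A i) (L i)) + (\<Sum>i<n. (norm (A i - B i))\<^sup>2)"
  have pointwise: "inner (A i) (F i - m - \<kappa> *\<^sub>R L i - \<kappa> *\<^sub>R (A i - B i))
        + inner (B i) (G i - m + \<kappa> *\<^sub>R (A i - B i))
      = (inner (A i) (F i) + inner (B i) (G i)) - inner (A i + B i) m
        - \<kappa> * (inner (A i) (L i) + (norm (A i - B i))\<^sup>2)" for i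
    by (simp add: power2_norm_eq_inner algebra_simps)
  have "(\<Sum>i<n. inner (A i + B i) m) = 0"
    using AB by (simp add: inner_sum_left[symmetric])
  then have "(\<Sum>i<n. inner (A i) (F i - m - \<kappa> *\<^sub>R L i - \<kappa> *\<^sub>R (A i - B i))
        + inner (B i) (G i - m + \<kappa> *\<^sub>R (A i - B i))) = X - \<kappa> * Y"
    unfolding pointwise X_def Y_def by (simp only: sum_subtractf sum.distrib sum_distrib_left[symmetric])
  moreover have "X \<le> sqrt E * sqrt (\<Sum>i<n. (norm (F i))\<^sup>2 + (norm (G i))\<^sup>2)"
    unfolding X_def E_def by (rule sum_inner_pairs_le)
  moreover have "consensus_rate \<mu> * E \<le> Y"
    unfolding E_def Y_def L_def by (rule consensus_rate_vector_bound[OF sym \<open>0 \<le> \<mu>\<close> \<open>0 < n\<close> gap AB])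
  then have "\<kappa> * consensus_rate \<mu> * E \<le> \<kappa> * Y"
    using mult_left_mono[OF _ \<open>0 \<le> \<kappa>\<close>] by (simp add: mult.assoc)
  ultimately show ?thesis
    unfolding L_def by linarith
qed

lemma tracking_lyapunov_inequality:
  fixes r :: "nat \<Rightarrow> real \<Rightarrow> 'v::euclidean_space"
  assumes sym: "symmetric_weights n a" and "0 < n" "0 \<le> \<mu>"
    and gap: "\<And>w. (\<Sum>i<n. w i) = 0 \<Longrightarrow> \<mu> * (\<Sum>i<n. (w i)\<^sup>2) \<le> laplacian_form n a w"
    and "0 \<le> \<kappa>" and ts: "tracking_system n a \<kappa> r f ra0 rb0 fa fb xa xb" and "0 \<le> t"
  shows "\<exists>D. ((\<lambda>t. (err_norm n r xa xb t)\<^sup>2) has_real_derivative D) (at t within {0..})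
    \<and> D \<le> 2 * inp_norm n fa fb t * err_norm n r xa xb t
          - 2 * (\<kappa> * consensus_rate \<mu>) * (err_norm n r xa xb t)\<^sup>2"
proof -
  define A B where "A i = tracking_error n r xa i t" and "B i = tracking_error n r xb i t" for i
  define A' B' where
    "A' i = fa i t - ref_avg n f t - \<kappa> *\<^sub>R (\<Sum>j<n. a i j *\<^sub>R (A i - A j)) - \<kappa> *\<^sub>R (A i - B i)"
    and "B' i = fb i t - ref_avg n f t + \<kappa> *\<^sub>R (A i - B i)" for i
  have E: "(\<Sum>i<n. (norm (A i))\<^sup>2 + (norm (B i))\<^sup>2) = (err_norm n r xa xb t)\<^sup>2"
    by (simp add: A_def B_def err_norm_power2)
  have AB: "(\<Sum>i<n. A i + B i) = 0"
    using tracking_errors_sum_zero[OF sym ts \<open>0 < n\<close> \<open>0 \<le> t\<close>] by (simp add: A_def B_def)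
  have "((\<lambda>t. (err_norm n r xa xb t)\<^sup>2) has_real_derivative
      (\<Sum>i<n. 2 * inner (A i) (A' i) + 2 * inner (B i) (B' i))) (at t within {0..})"
    unfolding err_norm_power2 A_def B_def A'_def B'_def
    by (intro DERIV_sum DERIV_add has_real_derivative_power2_norm
        tracking_error_has_vector_derivative[OF ts \<open>0 \<le> t\<close>]) auto
  moreover have "(\<Sum>i<n. inner (A i) (A' i) + inner (B i) (B' i))
      \<le> sqrt ((err_norm n r xa xb t)\<^sup>2) * inp_norm n fa fb t
        - \<kappa> * consensus_rate \<mu> * (err_norm n r xa xb t)\<^sup>2"
    using coupled_drift_bound[OF sym \<open>0 \<le> \<mu>\<close> \<open>0 < n\<close> gap \<open>0 \<le> \<kappa>\<close> AB,
        of "\<lambda>i. fa i t" "ref_avg n f t" "\<lambda>i. fb i t"]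
    unfolding E A'_def B'_def inp_norm_def .
  ultimately show ?thesis
    using err_norm_nonneg[of n r xa xb t]
    by (intro exI[of _ "\<Sum>i<n. 2 * inner (A i) (A' i) + 2 * inner (B i) (B' i)"])
      (simp add: sum.distrib sum_distrib_left[symmetric] algebra_simps)
qed

lemma tracking_error_bound:
  fixes r :: "nat \<Rightarrow> real \<Rightarrow> 'v::euclidean_space"
  assumes sym: "symmetric_weights n a" and "0 < n" "0 < \<mu>"
    and gap: "\<And>w. (\<Sum>i<n. w i) = 0 \<Longrightarrow> \<mu> * (\<Sum>i<n. (w i)\<^sup>2) \<le> laplacian_form n a w"
    and "0 < \<kappa>" and ts: "tracking_system n a \<kappa> r f ra0 rb0 fa fb xa xb" and "0 \<le> T"
    and U: "\<And>t. 0 \<le> t \<Longrightarrow> t \<le> T \<Longrightarrow> inp_norm n fa fb t \<le> U"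
  shows "err_norm n r xa xb T
    \<le> exp (- (\<kappa> * consensus_rate \<mu>) * T) * err_norm n r xa xb 0 + U / (\<kappa> * consensus_rate \<mu>)"
proof (rule energy_differential_inequality[where e = "err_norm n r xa xb"])
  show "0 < \<kappa> * consensus_rate \<mu>"
    using \<open>0 < \<kappa>\<close> consensus_rate_pos[OF \<open>0 < \<mu>\<close>] by simp
  show "0 \<le> U"
    using U[of 0] \<open>0 \<le> T\<close> inp_norm_nonneg[of n fa fb 0] by linarith
  show "0 \<le> T" "0 \<le> err_norm n r xa xb 0"
    by (simp_all add: \<open>0 \<le> T\<close> err_norm_nonneg)
  fix t assume t: "0 \<le> t" "t \<le> T"
  obtain D where deriv: "((\<lambda>t. (err_norm n r xa xb t)\<^sup>2) has_real_derivative D) (at t within {0..})"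
    and D: "D \<le> 2 * inp_norm n fa fb t * err_norm n r xa xb t
          - 2 * (\<kappa> * consensus_rate \<mu>) * (err_norm n r xa xb t)\<^sup>2"
    using tracking_lyapunov_inequality[OF sym \<open>0 < n\<close> less_imp_le[OF \<open>0 < \<mu>\<close>] gap
        less_imp_le[OF \<open>0 < \<kappa>\<close>] ts t(1)] by blast
  have "2 * inp_norm n fa fb t * err_norm n r xa xb t \<le> 2 * U * err_norm n r xa xb t"
    using U[OF t] by (intro mult_right_mono err_norm_nonneg) simp
  with D have "D \<le> 2 * U * err_norm n r xa xb t
      - 2 * (\<kappa> * consensus_rate \<mu>) * (err_norm n r xa xb t)\<^sup>2"
    by linarith
  with deriv show "\<exists>D. ((\<lambda>t. (err_norm n r xa xb t)\<^sup>2) has_real_derivative D) (at t within {0..})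
      \<and> D \<le> 2 * U * err_norm n r xa xb t - 2 * (\<kappa> * consensus_rate \<mu>) * (err_norm n r xa xb t)\<^sup>2"
    by blast
qed


section \<open>Input-to-state stability\<close>

lemma bdd_above_inp_norm:
  assumes "tracking_system n a \<kappa> r f ra0 rb0 fa fb xa xb"
  shows "bdd_above (inp_norm n fa fb ` {0..})"
proof -
  have "bounded (\<Union>i<n. fa i ` {0..} \<union> fb i ` {0..})"
    using assms unfolding tracking_system_def by (intro bounded_UN) auto
  then obtain B where B: "\<And>x. x \<in> (\<Union>i<n. fa i ` {0..} \<union> fb i ` {0..}) \<Longrightarrow> norm x \<le> B"
    unfolding bounded_iff by blast
  have "inp_norm n fa fb s \<le> sqrt (\<Sum>i<n. B\<^sup>2 + B\<^sup>2)" if "0 \<le> s" for s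
    unfolding inp_norm_def
  proof (intro real_sqrt_le_mono sum_mono add_mono power_mono)
    fix i assume "i \<in> {..<n}"
    then show "norm (fa i s) \<le> B" "norm (fb i s) \<le> B"
      using B that by auto
  qed auto
  then show ?thesis
    by (intro bdd_aboveI2) auto
qed

lemma class_KL_exp_decay:
  assumes "0 < \<rho>"
  shows "class_KL (\<lambda>s t. s * exp (- \<rho> * t))"
  unfolding class_KL_def class_K_def
proof (intro conjI allI impI)
  fix t :: real
  show "continuous_on {0..} (\<lambda>s. s * exp (- \<rho> * t))"
    by (intro continuous_intros)
  show "0 * exp (- \<rho> * t) = 0"
    by simp
  show "strict_mono_on {0..} (\<lambda>s. s * exp (- \<rho> * t))"
    by (intro strict_mono_onI) simp
next
  fix s :: real assume "0 \<le> s"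
  show "antimono_on {0..} (\<lambda>t. s * exp (- \<rho> * t))"
    using \<open>0 \<le> s\<close> \<open>0 < \<rho>\<close> by (intro monotone_onI mult_left_mono) auto
  have "filterlim (\<lambda>t. \<rho> * t) at_top at_top"
    using \<open>0 < \<rho>\<close> by (intro filterlim_tendsto_pos_mult_at_top[OF tendsto_const] filterlim_ident)
  then have "filterlim (\<lambda>t. - (\<rho> * t)) at_bot at_top"
    by (simp add: filterlim_uminus_at_bot)
  then have "((\<lambda>t. exp (- \<rho> * t)) \<longlongrightarrow> 0) at_top"
    using filterlim_compose[OF exp_at_bot] by simp
  then show "((\<lambda>t. s * exp (- \<rho> * t)) \<longlongrightarrow> 0) at_top"
    by (rule tendsto_mult_right_zero)
qed

lemma class_K_divide:
  assumes "0 < c"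
  shows "class_K (\<lambda>s. s / c)"
  unfolding class_K_def using assms
  by (intro conjI continuous_intros strict_mono_onI) (auto simp: divide_strict_right_mono)

lemma tracking_exponential_bound:
  assumes "2 \<le> n" "undirected_graph n a" "graph_connected n a" "0 < \<kappa>"
  obtains \<rho> where "0 < \<rho>"
    "\<kappa> / 2 * (lambda2 (laplacian n a) + 2 - sqrt ((lambda2 (laplacian n a))\<^sup>2 + 4)) \<le> \<rho>"
    "\<And>(r :: nat \<Rightarrow> real \<Rightarrow> 'v::euclidean_space) f ra0 rb0 fa fb xa xb t S.
      tracking_system n a \<kappa> r f ra0 rb0 fa fb xa xb \<Longrightarrow> 0 \<le> t \<Longrightarrow> {0..t} \<subseteq> S \<Longrightarrow> S \<subseteq> {0..} \<Longrightarrow>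
      err_norm n r xa xb t \<le> exp (- \<rho> * t) * err_norm n r xa xb 0 + Sup (inp_norm n fa fb ` S) / \<rho>"
proof -
  obtain \<mu> where "0 < \<mu>" and lambda2_le: "lambda2 (laplacian n a) \<le> \<mu>"
    and gap: "\<And>y. (\<Sum>i<n. y i) = 0 \<Longrightarrow> \<mu> * (\<Sum>i<n. (y i)\<^sup>2) \<le> laplacian_form n a y"
    using laplacian_spectral_gap[OF assms(1-3)] by blast
  have sym: "symmetric_weights n a" and "0 < n"
    using assms(1,2) by (simp_all add: undirected_graph_symmetric)
  show thesis
  proof (rule that)
    show "0 < \<kappa> * consensus_rate \<mu>"
      using \<open>0 < \<kappa>\<close> consensus_rate_pos[OF \<open>0 < \<mu>\<close>] by simp
    have "\<kappa> / 2 * (lambda2 (laplacian n a) + 2 - sqrt ((lambda2 (laplacian n a))\<^sup>2 + 4))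
        = \<kappa> * consensus_rate (lambda2 (laplacian n a))"
      by (simp add: consensus_rate_def)
    also have "\<dots> \<le> \<kappa> * consensus_rate \<mu>"
      using \<open>0 < \<kappa>\<close> by (intro mult_left_mono consensus_rate_mono lambda2_le) simp
    finally show "\<kappa> / 2 * (lambda2 (laplacian n a) + 2 - sqrt ((lambda2 (laplacian n a))\<^sup>2 + 4))
        \<le> \<kappa> * consensus_rate \<mu>" .
    fix r :: "nat \<Rightarrow> real \<Rightarrow> 'v" and f ra0 rb0 fa fb xa xb t and S :: "real set"
    assume ts: "tracking_system n a \<kappa> r f ra0 rb0 fa fb xa xb"
      and "0 \<le> t" "{0..t} \<subseteq> S" "S \<subseteq> {0..}"
    have "bdd_above (inp_norm n fa fb ` S)"
      using bdd_above_inp_norm[OF ts] \<open>S \<subseteq> {0..}\<close> by (rule bdd_above_mono[OF _ image_mono])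
    then have Sup: "inp_norm n fa fb s \<le> Sup (inp_norm n fa fb ` S)" if "0 \<le> s" "s \<le> t" for s
      using that \<open>{0..t} \<subseteq> S\<close> by (intro cSup_upper) auto
    show "err_norm n r xa xb t \<le> exp (- (\<kappa> * consensus_rate \<mu>) * t) * err_norm n r xa xb 0
        + Sup (inp_norm n fa fb ` S) / (\<kappa> * consensus_rate \<mu>)"
      by (rule tracking_error_bound[OF sym \<open>0 < n\<close> \<open>0 < \<mu>\<close> gap \<open>0 < \<kappa>\<close> ts \<open>0 \<le> t\<close> Sup])
  qed
qed

lemma tracking_input_to_state_stable:
  assumes "2 \<le> n" "undirected_graph n a" "graph_connected n a" "0 < \<kappa>"
  shows "\<exists>\<beta> \<gamma>. class_KL \<beta> \<and> class_K \<gamma> \<and>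
    (\<forall>(r :: nat \<Rightarrow> real \<Rightarrow> 'v::euclidean_space) f ra0 rb0 fa fb xa xb.
      tracking_system n a \<kappa> r f ra0 rb0 fa fb xa xb \<longrightarrow>
      (\<forall>t\<ge>0. err_norm n r xa xb t
        \<le> \<beta> (err_norm n r xa xb 0) t + \<gamma> (Sup (inp_norm n fa fb ` {0..t}))))"
proof -
  obtain \<rho> where "0 < \<rho>"
    and bound: "\<And>(r :: nat \<Rightarrow> real \<Rightarrow> 'v) f ra0 rb0 fa fb xa xb t S.
      tracking_system n a \<kappa> r f ra0 rb0 fa fb xa xb \<Longrightarrow> 0 \<le> t \<Longrightarrow> {0..t} \<subseteq> S \<Longrightarrow> S \<subseteq> {0..} \<Longrightarrow>
      err_norm n r xa xb t \<le> exp (- \<rho> * t) * err_norm n r xa xb 0 + Sup (inp_norm n fa fb ` S) / \<rho>"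
    by (rule tracking_exponential_bound[OF assms]) (rule that)
  show ?thesis
  proof (intro exI conjI allI impI)
    show "class_KL (\<lambda>s t. s * exp (- \<rho> * t))"
      using \<open>0 < \<rho>\<close> by (rule class_KL_exp_decay)
    show "class_K (\<lambda>s. s / \<rho>)"
      using \<open>0 < \<rho>\<close> by (rule class_K_divide)
    fix r :: "nat \<Rightarrow> real \<Rightarrow> 'v" and f ra0 rb0 fa fb xa xb and t :: real
    assume ts: "tracking_system n a \<kappa> r f ra0 rb0 fa fb xa xb" and "0 \<le> t"
    have "err_norm n r xa xb t
        \<le> exp (- \<rho> * t) * err_norm n r xa xb 0 + Sup (inp_norm n fa fb ` {0..t}) / \<rho>"
      using \<open>0 \<le> t\<close> by (intro bound[OF ts]) auto
    then show "err_norm n r xa xb t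
        \<le> err_norm n r xa xb 0 * exp (- \<rho> * t) + Sup (inp_norm n fa fb ` {0..t}) / \<rho>"
      by (simp add: mult.commute)
  qed
qed

lemma tracking_ultimately_bounded:
  assumes "2 \<le> n" "undirected_graph n a" "graph_connected n a" "0 < \<kappa>"
  shows "\<forall>(r :: nat \<Rightarrow> real \<Rightarrow> 'v::euclidean_space) f ra0 rb0 fa fb xa xb.
    tracking_system n a \<kappa> r f ra0 rb0 fa fb xa xb \<longrightarrow>
    (\<exists>B T. \<forall>t\<ge>T. \<forall>i<n. norm (xa i t - ref_avg n r t) \<le> B \<and> norm (xb i t - ref_avg n r t) \<le> B)"
proof (intro allI impI)
  obtain \<rho> where "0 < \<rho>"
    and bound: "\<And>(r :: nat \<Rightarrow> real \<Rightarrow> 'v) f ra0 rb0 fa fb xa xb t S.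
      tracking_system n a \<kappa> r f ra0 rb0 fa fb xa xb \<Longrightarrow> 0 \<le> t \<Longrightarrow> {0..t} \<subseteq> S \<Longrightarrow> S \<subseteq> {0..} \<Longrightarrow>
      err_norm n r xa xb t \<le> exp (- \<rho> * t) * err_norm n r xa xb 0 + Sup (inp_norm n fa fb ` S) / \<rho>"
    by (rule tracking_exponential_bound[OF assms]) (rule that)
  fix r :: "nat \<Rightarrow> real \<Rightarrow> 'v" and f ra0 rb0 fa fb xa xb
  assume ts: "tracking_system n a \<kappa> r f ra0 rb0 fa fb xa xb"
  define B where "B = err_norm n r xa xb 0 + Sup (inp_norm n fa fb ` {0..}) / \<rho>"
  have err_le: "err_norm n r xa xb t \<le> B" if "0 \<le> t" for t
  proof -
    have "err_norm n r xa xb t \<le> exp (- \<rho> * t) * err_norm n r xa xb 0 + Sup (inp_norm n fa fb ` {0..}) / \<rho>"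
      using that by (intro bound[OF ts]) auto
    moreover have "exp (- \<rho> * t) * err_norm n r xa xb 0 \<le> err_norm n r xa xb 0"
      using \<open>0 < \<rho>\<close> that by (intro mult_left_le_one_le err_norm_nonneg) auto
    ultimately show ?thesis
      unfolding B_def by linarith
  qed
  show "\<exists>B T. \<forall>t\<ge>T. \<forall>i<n. norm (xa i t - ref_avg n r t) \<le> B \<and> norm (xb i t - ref_avg n r t) \<le> B"
  proof (rule exI[of _ B], rule exI[of _ 0], intro allI impI conjI)
    fix t :: real and i assume "0 \<le> t" "i < n"
    show "norm (xa i t - ref_avg n r t) \<le> B"
      using tracking_error_le_err_norm(1)[OF \<open>i < n\<close>, unfolded tracking_error_def] err_le[OF \<open>0 \<le> t\<close>]
      by (rule order_trans)
    show "norm (xb i t - ref_avg n r t) \<le> B"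
      using tracking_error_le_err_norm(2)[OF \<open>i < n\<close>, unfolded tracking_error_def] err_le[OF \<open>0 \<le> t\<close>]
      by (rule order_trans)
  qed
qed

lemma tracking_exponential_convergence:
  assumes "2 \<le> n" "undirected_graph n a" "graph_connected n a" "0 < \<kappa>"
  shows "\<exists>K G. K \<ge> 0 \<and> G \<ge> 0 \<and>
    (\<forall>(r :: nat \<Rightarrow> real \<Rightarrow> 'v::euclidean_space) f ra0 rb0 fa fb xa xb.
      tracking_system n a \<kappa> r f ra0 rb0 fa fb xa xb \<longrightarrow>
      (\<forall>t\<ge>0. err_norm n r xa xb t
        \<le> K * err_norm n r xa xb 0
            * exp (- (\<kappa> / 2 * (lambda2 (laplacian n a) + 2 - sqrt ((lambda2 (laplacian n a))\<^sup>2 + 4))) * t)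
          + G * Sup (inp_norm n fa fb ` {0..})))"
proof -
  obtain \<rho> where "0 < \<rho>"
    and rate: "\<kappa> / 2 * (lambda2 (laplacian n a) + 2 - sqrt ((lambda2 (laplacian n a))\<^sup>2 + 4)) \<le> \<rho>"
    and bound: "\<And>(r :: nat \<Rightarrow> real \<Rightarrow> 'v) f ra0 rb0 fa fb xa xb t S.
      tracking_system n a \<kappa> r f ra0 rb0 fa fb xa xb \<Longrightarrow> 0 \<le> t \<Longrightarrow> {0..t} \<subseteq> S \<Longrightarrow> S \<subseteq> {0..} \<Longrightarrow>
      err_norm n r xa xb t \<le> exp (- \<rho> * t) * err_norm n r xa xb 0 + Sup (inp_norm n fa fb ` S) / \<rho>"
    by (rule tracking_exponential_bound[OF assms]) (rule that)
  show ?thesis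
  proof (rule exI[of _ 1], rule exI[of _ "1 / \<rho>"], intro conjI allI impI)
    show "0 \<le> (1::real)" "0 \<le> 1 / \<rho>"
      using \<open>0 < \<rho>\<close> by simp_all
    fix r :: "nat \<Rightarrow> real \<Rightarrow> 'v" and f ra0 rb0 fa fb xa xb and t :: real
    assume ts: "tracking_system n a \<kappa> r f ra0 rb0 fa fb xa xb" and "0 \<le> t"
    let ?c = "\<kappa> / 2 * (lambda2 (laplacian n a) + 2 - sqrt ((lambda2 (laplacian n a))\<^sup>2 + 4))"
    have "err_norm n r xa xb t \<le> exp (- \<rho> * t) * err_norm n r xa xb 0 + Sup (inp_norm n fa fb ` {0..}) / \<rho>"
      using \<open>0 \<le> t\<close> by (intro bound[OF ts]) auto
    moreover have "exp (- \<rho> * t) * err_norm n r xa xb 0 \<le> exp (- ?c * t) * err_norm n r xa xb 0"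
    proof (rule mult_right_mono[OF _ err_norm_nonneg])
      have "?c * t \<le> \<rho> * t"
        using rate \<open>0 \<le> t\<close> by (rule mult_right_mono)
      then show "exp (- \<rho> * t) \<le> exp (- ?c * t)"
        by simp
    qed
    ultimately have "err_norm n r xa xb t
        \<le> exp (- ?c * t) * err_norm n r xa xb 0 + Sup (inp_norm n fa fb ` {0..}) / \<rho>"
      by linarith
    then show "err_norm n r xa xb t
        \<le> 1 * err_norm n r xa xb 0 * exp (- ?c * t) + 1 / \<rho> * Sup (inp_norm n fa fb ` {0..})"
      by (simp add: mult.commute)
  qed
qed

theorem theorem2:
  fixes n :: nat and a :: "nat \<Rightarrow> nat \<Rightarrow> real" and \<kappa> :: real
  assumes "n \<ge> 2"
    and "undirected_graph n a"
    and "graph_connected n a"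
    and "\<kappa> > 0"
  shows
    \<comment> \<open>input-to-state stability (uniform KL / K bounds over all admissible data)\<close>
    "(\<exists>\<beta> \<gamma>. class_KL \<beta> \<and> class_K \<gamma> \<and>
       (\<forall>(r :: nat \<Rightarrow> real \<Rightarrow> 'v::euclidean_space) f ra0 rb0 fa fb xa xb.
          tracking_system n a \<kappa> r f ra0 rb0 fa fb xa xb \<longrightarrow>
          (\<forall>t\<ge>0. err_norm n r xa xb t
                   \<le> \<beta> (err_norm n r xa xb 0) t
                     + \<gamma> (Sup (inp_norm n fa fb ` {0..t})))))
     \<and>
     \<comment> \<open>ultimate boundedness of every tracking error\<close>
     (\<forall>(r :: nat \<Rightarrow> real \<Rightarrow> 'v) f ra0 rb0 fa fb xa xb.
          tracking_system n a \<kappa> r f ra0 rb0 fa fb xa xb \<longrightarrow>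
          (\<exists>B T. \<forall>t\<ge>T. \<forall>i<n. norm (xa i t - ref_avg n r t) \<le> B
                              \<and> norm (xb i t - ref_avg n r t) \<le> B))
     \<and>
     \<comment> \<open>exponential approach to the ultimate bound with rate at least c\<close>
     (\<exists>K G. K \<ge> 0 \<and> G \<ge> 0 \<and>
       (\<forall>(r :: nat \<Rightarrow> real \<Rightarrow> 'v) f ra0 rb0 fa fb xa xb.
          tracking_system n a \<kappa> r f ra0 rb0 fa fb xa xb \<longrightarrow>
          (\<forall>t\<ge>0. err_norm n r xa xb t
                   \<le> K * err_norm n r xa xb 0
                       * exp (- (\<kappa> / 2 * (lambda2 (laplacian n a) + 2
                                 - sqrt ((lambda2 (laplacian n a))\<^sup>2 + 4))) * t)
                     + G * Sup (inp_norm n fa fb ` {0..}))))"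
  by (rule conjI[OF tracking_input_to_state_stable[OF assms]
        conjI[OF tracking_ultimately_bounded[OF assms] tracking_exponential_convergence[OF assms]]])

end
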